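(* Let $\mathcal{S}$ be finite, $\Pi$ irreducible stochastic on $\mathcal{S}$, $Q=(q(y))$ its invariant distribution, and $X(t)=Z_{N(t)}$ the continuous-time chain obtained from a Markov chain $(Z_n)$ with transition matrix $\Pi$ and initial law $P(0)$ with positive entries, time-changed by an independent rate-one Poisson process $N$; let $\mathbb{P}$ be the underlying measure, $p(t,y):=\mathbb{P}(X(t)=y)$, $P(t)=(p(t,y))_y$, $\ell(t,y):=p(t,y)/q(y)$, and let $\mathbb{Q}$ be a probability measure under which $X$ has the same dynamics but initial law $Q$. Fix $T\in(0,\infty)$, let $\widehat X(s):=X(T-s)$ and $\widehat{\mathcal{G}}(s):=\sigma(\widehat X(u),0\le u\le s)$. Then: (i) $\ell(T-s,\widehat X(s))\log\ell(T-s,\widehat X(s))$, $0\le s\le T$, is a $(\widehat{\mathcal{G}},\mathbb{Q})$-submartingale; (ii) the relative entropy $H(P(t)\,|\,Q):=\sum_y p(t,y)\log(p(t,y)/q(y))$ is non-negative, non-increasing in $t$, and $\lim_{t\to\infty}H(P(t)\,|\,Q)=0$; (iii) $\log\ell(T-s,\widehat X(s))$, $0\le s\le T$, is a $(\widehat{\mathcal{G}},\mathbb{P})$-submartingale. *)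

theory Defs
  imports "HOL-Probability.Probability"
begin

definition stochastic_matrix :: "('s::finite \<Rightarrow> 's \<Rightarrow> real) \<Rightarrow> bool" where
  "stochastic_matrix P \<longleftrightarrow> (\<forall>x y. 0 \<le> P x y) \<and> (\<forall>x. (\<Sum>y\<in>UNIV. P x y) = 1)"

fun mpow :: "('s::finite \<Rightarrow> 's \<Rightarrow> real) \<Rightarrow> nat \<Rightarrow> 's \<Rightarrow> 's \<Rightarrow> real" where
  "mpow P 0 = (\<lambda>x y. if x = y then 1 else 0)"
| "mpow P (Suc n) = (\<lambda>x y. \<Sum>z\<in>UNIV. mpow P n x z * P z y)"

definition irreducible_matrix :: "('s::finite \<Rightarrow> 's \<Rightarrow> real) \<Rightarrow> bool" where
  "irreducible_matrix P \<longleftrightarrow> (\<forall>x y. \<exists>n. 0 < mpow P n x y)"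

definition invariant_distribution :: "('s::finite \<Rightarrow> 's \<Rightarrow> real) \<Rightarrow> ('s \<Rightarrow> real) \<Rightarrow> bool" where
  "invariant_distribution P q \<longleftrightarrow>
     (\<forall>y. 0 \<le> q y) \<and> (\<Sum>y\<in>UNIV. q y) = 1 \<and> (\<forall>y. (\<Sum>x\<in>UNIV. q x * P x y) = q y)"

definition markov_chain ::
  "'w measure \<Rightarrow> ('s::finite \<Rightarrow> 's \<Rightarrow> real) \<Rightarrow> ('s \<Rightarrow> real) \<Rightarrow> (nat \<Rightarrow> 'w \<Rightarrow> 's) \<Rightarrow> bool" where
  "markov_chain M P p0 Z \<longleftrightarrow>
     (\<forall>n. Z n \<in> measurable M (count_space UNIV)) \<and>
     (\<forall>n (xs :: nat \<Rightarrow> 's).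
        measure M {w \<in> space M. \<forall>i\<le>n. Z i w = xs i}
          = p0 (xs 0) * (\<Prod>i<n. P (xs i) (xs (Suc i))))"

definition poisson_process :: "'w measure \<Rightarrow> (real \<Rightarrow> 'w \<Rightarrow> nat) \<Rightarrow> bool" where
  "poisson_process M N \<longleftrightarrow>
     (\<forall>t. N t \<in> measurable M (count_space UNIV)) \<and>
     (\<forall>w\<in>space M. N 0 w = 0) \<and>
     (\<forall>w\<in>space M. \<forall>s t. 0 \<le> s \<longrightarrow> s \<le> t \<longrightarrow> N s w \<le> N t w) \<and>
     (\<forall>(ts :: nat \<Rightarrow> real) k (ns :: nat \<Rightarrow> nat).
        ts 0 = 0 \<longrightarrow> (\<forall>i<k. ts i < ts (Suc i)) \<longrightarrow>
        measure M {w \<in> space M. \<forall>i<k. N (ts (Suc i)) w - N (ts i) w = ns i}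
          = (\<Prod>i<k. (ts (Suc i) - ts i) ^ ns i / fact (ns i) * exp (- (ts (Suc i) - ts i))))"

definition uniformized_chain ::
  "'w measure \<Rightarrow> ('s::finite \<Rightarrow> 's \<Rightarrow> real) \<Rightarrow> ('s \<Rightarrow> real)
     \<Rightarrow> (nat \<Rightarrow> 'w \<Rightarrow> 's) \<Rightarrow> (real \<Rightarrow> 'w \<Rightarrow> nat) \<Rightarrow> bool" where
  "uniformized_chain M P p0 Z N \<longleftrightarrow>
     prob_space M \<and> markov_chain M P p0 Z \<and> poisson_process M N \<and>
     prob_space.indep_set M
       (sigma_sets (space M) {Z n -` A \<inter> space M | n A. True})
       (sigma_sets (space M) {N t -` A \<inter> space M | t A. 0 \<le> t})"

definition ctmc :: "(nat \<Rightarrow> 'w \<Rightarrow> 's) \<Rightarrow> (real \<Rightarrow> 'w \<Rightarrow> nat) \<Rightarrow> real \<Rightarrow> 'w \<Rightarrow> 's" where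
  "ctmc Z N t w = Z (N t w) w"

definition rev_filtration :: "'w measure \<Rightarrow> (real \<Rightarrow> 'w \<Rightarrow> 's) \<Rightarrow> real \<Rightarrow> real \<Rightarrow> 'w measure" where
  "rev_filtration M X T s =
     sigma (space M) {X (T - u) -` A \<inter> space M | u A. 0 \<le> u \<and> u \<le> s}"

definition submartingale_on ::
  "'w measure \<Rightarrow> (real \<Rightarrow> 'w measure) \<Rightarrow> real set \<Rightarrow> (real \<Rightarrow> 'w \<Rightarrow> real) \<Rightarrow> bool" where
  "submartingale_on M F I Y \<longleftrightarrow>
     (\<forall>s\<in>I. subalgebra M (F s)) \<and>
     (\<forall>s\<in>I. \<forall>u\<in>I. s \<le> u \<longrightarrow> sets (F s) \<subseteq> sets (F u)) \<and>
     (\<forall>s\<in>I. Y s \<in> borel_measurable (F s) \<and> integrable M (Y s)) \<and>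
     (\<forall>s\<in>I. \<forall>u\<in>I. s \<le> u \<longrightarrow> (AE w in M. Y s w \<le> real_cond_exp M (F s) (Y u) w))"

definition rel_entropy :: "('s::finite \<Rightarrow> real) \<Rightarrow> ('s \<Rightarrow> real) \<Rightarrow> real" where
  "rel_entropy p q = (\<Sum>y\<in>UNIV. p y * ln (p y / q y))"

end

(*
  The law p(t) of the uniformized chain satisfies p(t) = p(s) K(t - s) for s <= t, where
  K(tau) = sum_n e^(-tau) tau^n / n! Pi^n leaves q invariant and, by irreducibility, has
  positive entries for tau > 0.  The Markov property of X at finitely many times gives the
  conditional independence of past and future given the present; by Dynkin's argument it
  extends to the backward filtration, so that, given X(b) = x, the earlier state X(a) has the
  distribution z |-> p(a, z) K(b - a, z, x) / p(b, x).  Hence l(b, x) is the mean of l(a, .)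
  for the weights q(z) K(b - a, z, x) / q(x), and q(x) / p(b, x) is the mean of 1 / l(a, .)
  for the weights p(a, z) K(b - a, z, x) / p(b, x).  Jensen's inequality for the convex
  function x ln x under Q and for the concave function ln under P gives the two backward
  submartingales.  Summing the first inequality against q shows that H(P(t) | Q) decreases,
  and Doeblin's contraction for K(1) gives p(t) -> q, hence H(P(t) | Q) -> 0.
*)
theory Submission
  imports Defs
begin

section \<open>Poisson weights and the uniformized kernel\<close>

definition poisson_weight :: "real \<Rightarrow> nat \<Rightarrow> real" where
  "poisson_weight \<tau> n = \<tau> ^ n / fact n * exp (- \<tau>)"

lemma poisson_weight_nonneg: "0 \<le> \<tau> \<Longrightarrow> 0 \<le> poisson_weight \<tau> n"
  by (simp add: poisson_weight_def)

lemma poisson_weight_sums: "poisson_weight \<tau> sums 1"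
proof -
  have "(\<lambda>n. \<tau> ^ n / fact n * exp (- \<tau>)) sums (exp \<tau> * exp (- \<tau>))"
    using exp_converges[of \<tau>] by (intro sums_mult2) (simp add: divide_inverse mult.commute)
  then show ?thesis
    by (simp add: poisson_weight_def[abs_def] exp_minus)
qed

lemma poisson_weight_0: "poisson_weight 0 n = (if n = 0 then 1 else 0)"
  by (simp add: poisson_weight_def)

lemma mpow_nonneg: "stochastic_matrix P \<Longrightarrow> 0 \<le> mpow P n a b"
  by (induction n arbitrary: b) (auto simp: stochastic_matrix_def intro!: sum_nonneg)

lemma mpow_row_sum: "stochastic_matrix P \<Longrightarrow> (\<Sum>b\<in>UNIV. mpow P n a b) = 1"
proof (induction n)
  case (Suc n)
  have "(\<Sum>b\<in>UNIV. mpow P (Suc n) a b) = (\<Sum>z\<in>UNIV. mpow P n a z * (\<Sum>b\<in>UNIV. P z b))"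
    by (simp add: sum_distrib_left) (rule sum.swap)
  with Suc show ?case
    by (simp add: stochastic_matrix_def)
qed simp

lemma mpow_le_1: "stochastic_matrix P \<Longrightarrow> mpow P n a b \<le> 1"
  using member_le_sum[of b UNIV "mpow P n a"] mpow_nonneg mpow_row_sum by fastforce

lemma mpow_invariant: "invariant_distribution P q \<Longrightarrow> (\<Sum>a\<in>UNIV. q a * mpow P n a b) = q b"
proof (induction n arbitrary: b)
  case (Suc n)
  have "(\<Sum>a\<in>UNIV. q a * mpow P (Suc n) a b) = (\<Sum>z\<in>UNIV. (\<Sum>a\<in>UNIV. q a * mpow P n a z) * P z b)"
    by (simp add: sum_distrib_left sum_distrib_right mult.assoc) (rule sum.swap)
  with Suc show ?case
    by (simp add: invariant_distribution_def)
qed (simp add: if_distrib cong: if_cong)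

lemma invariant_distribution_pos:
  assumes "stochastic_matrix P" "irreducible_matrix P" "invariant_distribution P q"
  shows "0 < q y"
proof -
  have q: "\<And>x. 0 \<le> q x" "(\<Sum>x\<in>UNIV. q x) = 1"
    using assms(3) by (auto simp: invariant_distribution_def)
  then obtain x where x: "0 < q x"
    by (metis less_eq_real_def sum.neutral zero_neq_one)
  obtain n where n: "0 < mpow P n x y"
    using assms(2) by (auto simp: irreducible_matrix_def)
  have "q x * mpow P n x y \<le> (\<Sum>x\<in>UNIV. q x * mpow P n x y)"
    by (rule member_le_sum) (auto intro: mult_nonneg_nonneg q mpow_nonneg[OF assms(1)])
  also have "\<dots> = q y"
    by (rule mpow_invariant[OF assms(3)])
  finally show ?thesis
    using mult_pos_pos[OF x n] by linarith
qed

text \<open>The transition matrix \<open>exp (\<tau> (P - I))\<close> of the chain uniformized by a rate-one Poisson clock.\<close>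
definition uniformized_kernel :: "('s::finite \<Rightarrow> 's \<Rightarrow> real) \<Rightarrow> real \<Rightarrow> 's \<Rightarrow> 's \<Rightarrow> real" where
  "uniformized_kernel P \<tau> a b = (\<Sum>n. poisson_weight \<tau> n * mpow P n a b)"

lemma uniformized_kernel_summable:
  assumes "stochastic_matrix P" "0 \<le> \<tau>"
  shows "summable (\<lambda>n. poisson_weight \<tau> n * mpow P n a b)"
proof (rule summable_comparison_test[OF _ sums_summable[OF poisson_weight_sums]])
  have "norm (poisson_weight \<tau> n * mpow P n a b) \<le> poisson_weight \<tau> n" for n
    using assms by (simp add: abs_mult mpow_nonneg mpow_le_1 poisson_weight_nonneg mult_left_le)
  then show "\<exists>N. \<forall>n\<ge>N. norm (poisson_weight \<tau> n * mpow P n a b) \<le> poisson_weight \<tau> n"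
    by blast
qed

lemma uniformized_kernel_sums:
  "stochastic_matrix P \<Longrightarrow> 0 \<le> \<tau> \<Longrightarrow> (\<lambda>n. poisson_weight \<tau> n * mpow P n a b) sums uniformized_kernel P \<tau> a b"
  unfolding uniformized_kernel_def by (rule summable_sums[OF uniformized_kernel_summable])

lemma uniformized_kernel_ge_term:
  assumes "stochastic_matrix P" "0 \<le> \<tau>"
  shows "poisson_weight \<tau> n * mpow P n a b \<le> uniformized_kernel P \<tau> a b"
proof -
  have "(\<Sum>m\<in>{n}. poisson_weight \<tau> m * mpow P m a b) \<le> uniformized_kernel P \<tau> a b"
    unfolding uniformized_kernel_def using assms
    by (intro sum_le_suminf uniformized_kernel_summable) (auto simp: mpow_nonneg poisson_weight_nonneg)
  then show ?thesis
    by simp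
qed

lemma uniformized_kernel_nonneg:
  assumes "stochastic_matrix P" "0 \<le> \<tau>"
  shows "0 \<le> uniformized_kernel P \<tau> a b"
proof -
  have "0 \<le> poisson_weight \<tau> 0 * mpow P 0 a b"
    by (simp add: poisson_weight_def)
  also have "\<dots> \<le> uniformized_kernel P \<tau> a b"
    using assms by (rule uniformized_kernel_ge_term)
  finally show ?thesis .
qed

lemma uniformized_kernel_pos:
  assumes "stochastic_matrix P" "irreducible_matrix P" "0 < \<tau>"
  shows "0 < uniformized_kernel P \<tau> a b"
proof -
  obtain n where "0 < mpow P n a b"
    using assms(2) by (auto simp: irreducible_matrix_def)
  then have "0 < poisson_weight \<tau> n * mpow P n a b"
    using assms(3) by (simp add: poisson_weight_def)
  also have "\<dots> \<le> uniformized_kernel P \<tau> a b"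
    using assms by (intro uniformized_kernel_ge_term) auto
  finally show ?thesis .
qed

lemma uniformized_kernel_0: "uniformized_kernel P 0 a b = (if a = b then 1 else 0)"
proof -
  have "(\<lambda>n. poisson_weight 0 n * mpow P n a b) = (\<lambda>n. if n = 0 then mpow P n a b else 0)"
    by (simp add: poisson_weight_0 fun_eq_iff)
  then have "(\<lambda>n. poisson_weight 0 n * mpow P n a b) sums mpow P 0 a b"
    using sums_single[of 0 "\<lambda>n. mpow P n a b"] by simp
  then have "uniformized_kernel P 0 a b = mpow P 0 a b"
    unfolding uniformized_kernel_def by (rule sums_unique[symmetric])
  then show ?thesis
    by simp
qed

lemma uniformized_kernel_row_sum:
  assumes "stochastic_matrix P" "0 \<le> \<tau>"
  shows "(\<Sum>b\<in>UNIV. uniformized_kernel P \<tau> a b) = 1"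
proof -
  have "(\<lambda>n. \<Sum>b\<in>UNIV. poisson_weight \<tau> n * mpow P n a b) sums (\<Sum>b\<in>UNIV. uniformized_kernel P \<tau> a b)"
    by (intro sums_sum uniformized_kernel_sums assms)
  moreover have "(\<lambda>n. \<Sum>b\<in>UNIV. poisson_weight \<tau> n * mpow P n a b) = poisson_weight \<tau>"
    by (simp add: sum_distrib_left[symmetric] mpow_row_sum[OF assms(1)])
  ultimately show ?thesis
    using poisson_weight_sums sums_unique2 by metis
qed

lemma uniformized_kernel_invariant:
  assumes "stochastic_matrix P" "invariant_distribution P q" "0 \<le> \<tau>"
  shows "(\<Sum>a\<in>UNIV. q a * uniformized_kernel P \<tau> a b) = q b"
proof -
  have "(\<lambda>n. \<Sum>a\<in>UNIV. q a * (poisson_weight \<tau> n * mpow P n a b)) sums (\<Sum>a\<in>UNIV. q a * uniformized_kernel P \<tau> a b)"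
    by (intro sums_sum sums_mult uniformized_kernel_sums assms)
  moreover have "(\<lambda>n. \<Sum>a\<in>UNIV. q a * (poisson_weight \<tau> n * mpow P n a b)) = (\<lambda>n. poisson_weight \<tau> n * q b)"
  proof
    fix n
    have "(\<Sum>a\<in>UNIV. q a * (poisson_weight \<tau> n * mpow P n a b))
        = poisson_weight \<tau> n * (\<Sum>a\<in>UNIV. q a * mpow P n a b)"
      by (simp add: sum_distrib_left mult.left_commute)
    then show "(\<Sum>a\<in>UNIV. q a * (poisson_weight \<tau> n * mpow P n a b)) = poisson_weight \<tau> n * q b"
      by (simp add: mpow_invariant[OF assms(2)])
  qed
  moreover have "(\<lambda>n. poisson_weight \<tau> n * q b) sums q b"
    using sums_mult2[OF poisson_weight_sums[of \<tau>], of "q b"] by simp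
  ultimately show ?thesis
    using sums_unique2 by metis
qed

section \<open>Relative entropy\<close>

lemma convex_on_xlnx: "convex_on {0<..} (\<lambda>x::real. x * ln x)"
proof (rule convex_on_realI[where f' = "\<lambda>x. ln x + 1"])
  show "((\<lambda>x. x * ln x) has_real_derivative ln x + 1) (at x)" if "x \<in> {0<..}" for x :: real
    using that by (auto intro!: derivative_eq_intros)
qed auto

lemma xlnx_ratio_kernel_le:
  fixes p q c :: "'s::finite \<Rightarrow> real"
  assumes p: "\<And>z. 0 < p z" and q: "\<And>z. 0 < q z" and c: "\<And>z. 0 \<le> c z"
    and q': "(\<Sum>z\<in>UNIV. q z * c z) = q'" "0 < q'" and p': "(\<Sum>z\<in>UNIV. p z * c z) = p'"
  shows "p' / q' * ln (p' / q') \<le> (\<Sum>z\<in>UNIV. p z / q z * ln (p z / q z) * (q z * c z)) / q'"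
proof -
  let ?w = "\<lambda>z. q z * c z / q'"
  have "(\<lambda>x. x * ln x) (\<Sum>z\<in>UNIV. ?w z *\<^sub>R (p z / q z))
      \<le> (\<Sum>z\<in>UNIV. ?w z * (\<lambda>x. x * ln x) (p z / q z))"
    by (rule convex_on_sum[OF _ _ convex_on_xlnx, where a = ?w and y = "\<lambda>z. p z / q z"])
      (use p q c q' in \<open>auto simp: sum_divide_distrib[symmetric] less_imp_le intro!: divide_nonneg_pos mult_nonneg_nonneg\<close>)
  moreover have "(\<Sum>z\<in>UNIV. ?w z *\<^sub>R (p z / q z)) = p' / q'"
    unfolding p'[symmetric] sum_divide_distrib
    by (intro sum.cong refl) (use q in \<open>simp add: less_imp_neq[symmetric]\<close>)
  moreover have "(\<Sum>z\<in>UNIV. ?w z * (\<lambda>x. x * ln x) (p z / q z))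
      = (\<Sum>z\<in>UNIV. p z / q z * ln (p z / q z) * (q z * c z)) / q'"
    unfolding sum_divide_distrib by (intro sum.cong refl) (simp only: times_divide_eq_left mult_ac)
  ultimately show ?thesis
    by simp
qed

lemma ln_ratio_kernel_le:
  fixes p q c :: "'s::finite \<Rightarrow> real"
  assumes p: "\<And>z. 0 < p z" and q: "\<And>z. 0 < q z" and c: "\<And>z. 0 \<le> c z"
    and q': "(\<Sum>z\<in>UNIV. q z * c z) = q'" "0 < q'" and p': "(\<Sum>z\<in>UNIV. p z * c z) = p'" "0 < p'"
  shows "ln (p' / q') \<le> (\<Sum>z\<in>UNIV. ln (p z / q z) * (p z * c z)) / p'"
proof -
  let ?v = "\<lambda>z. p z * c z / p'"
  have "(\<Sum>z\<in>UNIV. ?v z * ln (q z / p z)) \<le> ln (\<Sum>z\<in>UNIV. ?v z *\<^sub>R (q z / p z))"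
    by (rule concave_on_sum[OF _ _ ln_concave, where a = ?v and y = "\<lambda>z. q z / p z"])
      (use p q c p' in \<open>auto simp: sum_divide_distrib[symmetric] less_imp_le intro!: divide_nonneg_pos mult_nonneg_nonneg\<close>)
  moreover have "(\<Sum>z\<in>UNIV. ?v z *\<^sub>R (q z / p z)) = q' / p'"
    unfolding q'(1)[symmetric] sum_divide_distrib
    by (intro sum.cong refl) (use p in \<open>simp add: less_imp_neq[symmetric]\<close>)
  moreover have "ln (q z / p z) = - ln (p z / q z)" for z
    using p q by (simp add: ln_div)
  moreover have "ln (q' / p') = - ln (p' / q')"
    using p' q' by (simp add: ln_div)
  ultimately show ?thesis
    by (simp add: sum_divide_distrib sum_negf mult_ac)
qed

lemma rel_entropy_eq_xlnx:
  "(\<And>y. 0 < q y) \<Longrightarrow> rel_entropy p q = (\<Sum>y\<in>UNIV. p y / q y * ln (p y / q y) * q y)"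
  unfolding rel_entropy_def by (intro sum.cong) (auto simp: less_imp_neq[symmetric])

lemma rel_entropy_nonneg:
  assumes "\<And>y. 0 < p y" "(\<Sum>y\<in>UNIV. p y) = 1" "\<And>y. 0 < q y" "(\<Sum>y\<in>UNIV. q y) = 1"
  shows "0 \<le> rel_entropy p q"
  using xlnx_ratio_kernel_le[of p q "\<lambda>_. 1" 1 1] assms by (simp add: rel_entropy_eq_xlnx)

lemma rel_entropy_kernel_le:
  fixes p q :: "'s::finite \<Rightarrow> real" and K :: "'s \<Rightarrow> 's \<Rightarrow> real"
  assumes p: "\<And>x. 0 < p x" and q: "\<And>x. 0 < q x"
    and K: "\<And>x y. 0 \<le> K x y" "\<And>x. (\<Sum>y\<in>UNIV. K x y) = 1"
    and qK: "\<And>y. (\<Sum>x\<in>UNIV. q x * K x y) = q y"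
    and pK: "\<And>y. p' y = (\<Sum>x\<in>UNIV. p x * K x y)"
  shows "rel_entropy p' q \<le> rel_entropy p q"
proof -
  let ?f = "\<lambda>x. p x / q x * ln (p x / q x)"
  have "p' y / q y * ln (p' y / q y) \<le> (\<Sum>x\<in>UNIV. ?f x * (q x * K x y)) / q y" for y
    by (rule xlnx_ratio_kernel_le) (use p q K(1) qK pK in auto)
  then have "p' y / q y * ln (p' y / q y) * q y \<le> (\<Sum>x\<in>UNIV. ?f x * (q x * K x y))" for y
    using q[of y] pos_le_divide_eq by blast
  then have "rel_entropy p' q \<le> (\<Sum>y\<in>UNIV. \<Sum>x\<in>UNIV. ?f x * (q x * K x y))"
    unfolding rel_entropy_eq_xlnx[OF q] by (rule sum_mono)
  also have "\<dots> = (\<Sum>x\<in>UNIV. \<Sum>y\<in>UNIV. ?f x * q x * K x y)"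
    by (subst sum.swap) (simp only: mult.assoc)
  also have "\<dots> = (\<Sum>x\<in>UNIV. ?f x * q x * (\<Sum>y\<in>UNIV. K x y))"
    by (simp only: sum_distrib_left)
  also have "\<dots> = rel_entropy p q"
    by (simp add: K(2) rel_entropy_eq_xlnx[OF q])
  finally show ?thesis .
qed

lemma tendsto_rel_entropy_0:
  assumes "\<And>y. ((\<lambda>t. p t y) \<longlongrightarrow> q y) F" "\<And>y. 0 < q y"
  shows "((\<lambda>t. rel_entropy (p t) q) \<longlongrightarrow> 0) F"
proof -
  have "((\<lambda>t. rel_entropy (p t) q) \<longlongrightarrow> (\<Sum>y\<in>UNIV. q y * ln (q y / q y))) F"
    unfolding rel_entropy_def using assms(2)
    by (intro tendsto_sum tendsto_mult tendsto_ln tendsto_divide assms(1) tendsto_const)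
      (auto simp: less_imp_neq[symmetric])
  then show ?thesis
    using assms(2) by (simp add: less_imp_neq[symmetric])
qed

section \<open>Doeblin's convergence theorem\<close>

lemma l1_norm_kernel_contraction:
  fixes d :: "'s::finite \<Rightarrow> real" and K :: "'s \<Rightarrow> 's \<Rightarrow> real" and \<delta> :: real
  assumes K: "\<And>x. (\<Sum>y\<in>UNIV. K x y) = 1" "\<And>x y. \<delta> \<le> K x y" and d: "(\<Sum>x\<in>UNIV. d x) = 0"
  shows "(\<Sum>y\<in>UNIV. \<bar>\<Sum>x\<in>UNIV. d x * K x y\<bar>) \<le> (1 - CARD('s) * \<delta>) * (\<Sum>x\<in>UNIV. \<bar>d x\<bar>)"
proof -
  have "(\<Sum>x\<in>UNIV. d x * (K x y - \<delta>)) = (\<Sum>x\<in>UNIV. d x * K x y) - \<delta> * (\<Sum>x\<in>UNIV. d x)" for y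
    by (simp add: right_diff_distrib sum_subtractf sum_distrib_left mult.commute)
  then have "\<bar>\<Sum>x\<in>UNIV. d x * K x y\<bar> = \<bar>\<Sum>x\<in>UNIV. d x * (K x y - \<delta>)\<bar>" for y
    using d by simp
  also have "\<dots> y \<le> (\<Sum>x\<in>UNIV. \<bar>d x\<bar> * (K x y - \<delta>))" for y
    using sum_abs[of "\<lambda>x. d x * (K x y - \<delta>)" UNIV] K(2) by (simp add: abs_mult)
  finally have "(\<Sum>y\<in>UNIV. \<bar>\<Sum>x\<in>UNIV. d x * K x y\<bar>) \<le> (\<Sum>y\<in>UNIV. \<Sum>x\<in>UNIV. \<bar>d x\<bar> * (K x y - \<delta>))"
    by (rule sum_mono)
  also have "\<dots> = (\<Sum>x\<in>UNIV. \<bar>d x\<bar> * (\<Sum>y\<in>UNIV. K x y - \<delta>))"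
    by (subst sum.swap) (simp add: sum_distrib_left)
  also have "\<dots> = (\<Sum>x\<in>UNIV. \<bar>d x\<bar> * (1 - CARD('s) * \<delta>))"
    by (simp add: sum_subtractf K(1))
  also have "\<dots> = (1 - CARD('s) * \<delta>) * (\<Sum>x\<in>UNIV. \<bar>d x\<bar>)"
    by (metis mult.commute sum_distrib_right)
  finally show ?thesis .
qed

lemma l1_dist_geometric_bound:
  fixes p :: "real \<Rightarrow> 's::finite \<Rightarrow> real" and q :: "'s \<Rightarrow> real" and K :: "'s \<Rightarrow> 's \<Rightarrow> real"
    and \<delta> :: real
  assumes K: "\<And>x. (\<Sum>y\<in>UNIV. K x y) = 1" "\<And>x y. \<delta> \<le> K x y" "0 \<le> 1 - CARD('s) * \<delta>"
    and p_step: "\<And>t y. 1 \<le> t \<Longrightarrow> p t y = (\<Sum>x\<in>UNIV. p (t - 1) x * K x y)"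
    and q_inv: "\<And>y. (\<Sum>x\<in>UNIV. q x * K x y) = q y"
    and p: "\<And>t y. 0 \<le> p t y" "\<And>t. (\<Sum>y\<in>UNIV. p t y) = 1"
    and q: "\<And>y. 0 \<le> q y" "(\<Sum>y\<in>UNIV. q y) = 1"
    and "real n \<le> t"
  shows "(\<Sum>y\<in>UNIV. \<bar>p t y - q y\<bar>) \<le> 2 * (1 - CARD('s) * \<delta>) ^ n"
  using \<open>real n \<le> t\<close>
proof (induction n arbitrary: t)
  case 0
  have "(\<Sum>y\<in>UNIV. \<bar>p t y - q y\<bar>) \<le> (\<Sum>y\<in>UNIV. p t y + q y)"
    using p(1) q(1) by (intro sum_mono) (simp add: abs_le_iff)
  then show ?case
    using p(2) q(2) by (simp add: sum.distrib)
next
  case (Suc n)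
  have "p t y - q y = (\<Sum>x\<in>UNIV. (p (t - 1) x - q x) * K x y)" for y
    using Suc.prems p_step[of t y] q_inv[of y] by (simp add: left_diff_distrib sum_subtractf)
  then have "(\<Sum>y\<in>UNIV. \<bar>p t y - q y\<bar>) \<le> (1 - CARD('s) * \<delta>) * (\<Sum>x\<in>UNIV. \<bar>p (t - 1) x - q x\<bar>)"
    using p(2) q(2) by (simp add: l1_norm_kernel_contraction[OF K(1,2)] sum_subtractf)
  also have "\<dots> \<le> (1 - CARD('s) * \<delta>) * (2 * (1 - CARD('s) * \<delta>) ^ n)"
    using Suc K(3) by (intro mult_left_mono) auto
  finally show ?case
    by simp
qed

lemma doeblin_tendsto:
  fixes p :: "real \<Rightarrow> 's::finite \<Rightarrow> real" and q :: "'s \<Rightarrow> real" and K :: "'s \<Rightarrow> 's \<Rightarrow> real"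
  assumes K: "\<And>x. (\<Sum>y\<in>UNIV. K x y) = 1" "\<And>x y. 0 < K x y"
    and p_step: "\<And>t y. 1 \<le> t \<Longrightarrow> p t y = (\<Sum>x\<in>UNIV. p (t - 1) x * K x y)"
    and q_inv: "\<And>y. (\<Sum>x\<in>UNIV. q x * K x y) = q y"
    and p: "\<And>t y. 0 \<le> p t y" "\<And>t. (\<Sum>y\<in>UNIV. p t y) = 1"
    and q: "\<And>y. 0 \<le> q y" "(\<Sum>y\<in>UNIV. q y) = 1"
  shows "((\<lambda>t. p t y) \<longlongrightarrow> q y) at_top"
proof -
  define \<delta> where "\<delta> = Min (range (\<lambda>(x, y). K x y))"
  define c where "c = 1 - CARD('s) * \<delta>"
  have "\<delta> \<in> range (\<lambda>(x, y). K x y)"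
    unfolding \<delta>_def by (rule Min_in) auto
  then have "0 < \<delta>"
    using K(2) by auto
  have \<delta>: "\<delta> \<le> K x y" for x y
    unfolding \<delta>_def by (rule Min_le) auto
  have "CARD('s) * \<delta> \<le> (\<Sum>y\<in>UNIV. K x y)" for x
    using sum_mono[of UNIV "\<lambda>_. \<delta>" "K x"] \<delta> by simp
  then have c: "0 \<le> c" "c < 1"
    using K(1) \<open>0 < \<delta>\<close> by (auto simp: c_def)
  have D: "((\<lambda>t. \<Sum>y\<in>UNIV. \<bar>p t y - q y\<bar>) \<longlongrightarrow> 0) at_top"
  proof (rule tendstoI)
    fix e :: real
    assume "0 < e"
    moreover have "(\<lambda>n. 2 * c ^ n) \<longlonglongrightarrow> 0"
      using c tendsto_mult_right_zero LIMSEQ_power_zero by fastforce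
    ultimately obtain n where "2 * c ^ n < e"
      by (metis eventually_sequentially order_tendstoD(2) order_refl)
    moreover have "eventually (\<lambda>t. real n \<le> t) at_top"
      by (rule eventually_ge_at_top)
    ultimately show "eventually (\<lambda>t. dist (\<Sum>y\<in>UNIV. \<bar>p t y - q y\<bar>) 0 < e) at_top"
      using l1_dist_geometric_bound[where K = K and \<delta> = \<delta> and p = p and q = q and n = n,
          OF K(1) \<delta> _ p_step q_inv p q] c
      by (elim eventually_mono) (fastforce simp: c_def)
  qed
  have "norm (p t y - q y) \<le> (\<Sum>y\<in>UNIV. \<bar>p t y - q y\<bar>)" for t
    using member_le_sum[of y UNIV "\<lambda>y. \<bar>p t y - q y\<bar>"] by simp
  then have "((\<lambda>t. p t y - q y) \<longlongrightarrow> 0) at_top"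
    by (intro Lim_null_comparison[OF _ D] always_eventually) auto
  then show ?thesis
    by (simp add: LIM_zero_iff)
qed

lemma finite_strict_enumeration:
  fixes A :: "real set"
  assumes "finite A" "A \<noteq> {}"
  shows "\<exists>k ts. ts ` {..k} = A \<and> (\<forall>i<k. ts i < ts (Suc i)) \<and> ts 0 = Min A \<and> ts k = Max A"
  using assms
proof (induction A rule: finite_linorder_max_induct)
  case (insert b A)
  show ?case
  proof (cases "A = {}")
    case True
    then show ?thesis
      by (intro exI[of _ 0] exI[of _ "\<lambda>_. b"]) auto
  next
    case False
    then obtain k ts where k: "ts ` {..k} = A" "\<forall>i<k. ts i < ts (Suc i)" "ts 0 = Min A" "ts k = Max A"
      using insert by blast
    have "Max A < b" "Max (insert b A) = b"
      using insert False by (auto intro!: Max_eqI)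
    moreover have "Min (insert b A) = Min A"
      using insert False by (metis Min_in Min_insert less_imp_le min.absorb2 min.commute)
    moreover have "(ts(Suc k := b)) ` {..Suc k} = insert b A"
    proof -
      have "(ts(Suc k := b)) ` {..Suc k} = insert b ((ts(Suc k := b)) ` {..k})"
        by (simp only: atMost_Suc image_insert fun_upd_same)
      also have "(ts(Suc k := b)) ` {..k} = ts ` {..k}"
        by (intro image_cong) auto
      finally show ?thesis
        using k by simp
    qed
    ultimately show ?thesis
      using k by (intro exI[of _ "Suc k"] exI[of _ "ts(Suc k := b)"]) (auto simp: less_Suc_eq)
  qed
qed simp

lemma increasing_from_0_nonneg:
  fixes ts :: "nat \<Rightarrow> real"
  assumes "ts 0 = 0" "\<forall>i<k. ts i < ts (Suc i)" "i \<le> k"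
  shows "0 \<le> ts i"
  using assms(3)
proof (induction i)
  case (Suc i)
  then have "0 \<le> ts i" "ts i < ts (Suc i)"
    using assms(2) by auto
  then show ?case
    by linarith
qed (simp add: assms(1))

lemma Int_in_sigma_sets:
  assumes "G \<subseteq> Pow \<Omega>" "a \<in> sigma_sets \<Omega> G" "b \<in> sigma_sets \<Omega> G"
  shows "a \<inter> b \<in> sigma_sets \<Omega> G"
proof -
  interpret sigma_algebra \<Omega> "sigma_sets \<Omega> G"
    using assms(1) by (rule sigma_algebra_sigma_sets)
  show ?thesis
    using assms(2,3) by (rule Int)
qed

lemma (in finite_measure) measure_Diff_Int:
  assumes "A \<in> sets M" "C \<in> sets M"
  shows "measure M ((space M - A) \<inter> C) = measure M C - measure M (A \<inter> C)"
proof -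
  have "(space M - A) \<inter> C = C - (A \<inter> C)"
    using sets.sets_into_space[OF assms(2)] by auto
  then show ?thesis
    using assms by (simp add: finite_measure_Diff)
qed

lemma (in finite_measure) sums_measure_UN_Int:
  assumes "range A \<subseteq> sets M" "disjoint_family A" "C \<in> sets M"
  shows "(\<lambda>i. measure M (A i \<inter> C)) sums measure M ((\<Union>i. A i) \<inter> C)"
proof -
  have "(\<lambda>i. measure M (A i \<inter> C)) sums measure M (\<Union>i. A i \<inter> C)"
    using assms by (intro finite_measure_UNION) (auto simp: disjoint_family_on_def)
  moreover have "(\<Union>i. A i \<inter> C) = (\<Union>i. A i) \<inter> C"
    by auto
  ultimately show ?thesis
    by simp
qed

lemma (in finite_measure) measure_Int_proportional_sigma_sets:
  assumes G: "Int_stable G" "G \<subseteq> Pow (space M)" "sigma_sets (space M) G \<subseteq> sets M"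
    and CD: "C \<in> sets M" "D \<in> sets M"
    and basic: "\<And>A. A \<in> G \<Longrightarrow> measure M (A \<inter> C) * measure M D = measure M C * measure M (A \<inter> D)"
    and A: "A \<in> sigma_sets (space M) G"
  shows "measure M (A \<inter> C) * measure M D = measure M C * measure M (A \<inter> D)"
  using G(1,2) A
proof (induction A rule: sigma_sets_induct_disjoint)
  case (compl A)
  then have "A \<in> sets M"
    using G(3) by auto
  then show ?case
    using compl.IH CD by (simp add: measure_Diff_Int algebra_simps)
next
  case (union A)
  then have "range A \<subseteq> sets M"
    using G(3) by auto
  then have "(\<lambda>i. measure M (A i \<inter> C)) sums measure M ((\<Union>i. A i) \<inter> C)"
    "(\<lambda>i. measure M (A i \<inter> D)) sums measure M ((\<Union>i. A i) \<inter> D)"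
    using union(1) CD by (simp_all add: sums_measure_UN_Int)
  then have "(\<lambda>i. measure M (A i \<inter> C) * measure M D) sums (measure M ((\<Union>i. A i) \<inter> C) * measure M D)"
    "(\<lambda>i. measure M C * measure M (A i \<inter> D)) sums (measure M C * measure M ((\<Union>i. A i) \<inter> D))"
    by (auto intro: sums_mult sums_mult2)
  moreover have "(\<lambda>i. measure M (A i \<inter> C) * measure M D) = (\<lambda>i. measure M C * measure M (A i \<inter> D))"
    using union.IH by simp
  ultimately show ?case
    using sums_unique2 by simp
qed (simp_all add: basic)

section \<open>The uniformized chain\<close>

locale uniformized_process =
  fixes M :: "'w measure" and P :: "'s::finite \<Rightarrow> 's \<Rightarrow> real" and p0 :: "'s \<Rightarrow> real"
    and Z :: "nat \<Rightarrow> 'w \<Rightarrow> 's" and N :: "real \<Rightarrow> 'w \<Rightarrow> nat"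
  assumes uniformized: "uniformized_chain M P p0 Z N" and stochastic: "stochastic_matrix P"
begin

sublocale prob_space M
  using uniformized by (simp add: uniformized_chain_def)

abbreviation X :: "real \<Rightarrow> 'w \<Rightarrow> 's" where
  "X \<equiv> ctmc Z N"

definition X_path :: "real set \<Rightarrow> (real \<Rightarrow> 's) \<Rightarrow> 'w set" where
  "X_path S f = {w \<in> space M. \<forall>v\<in>S. X v w = f v}"

definition N_path :: "real set \<Rightarrow> (real \<Rightarrow> nat) \<Rightarrow> 'w set" where
  "N_path S g = {w \<in> space M. \<forall>v\<in>S. N v w = g v}"

lemma Z_measurable[measurable]: "Z n \<in> measurable M (count_space UNIV)"
  using uniformized by (simp add: uniformized_chain_def markov_chain_def)

lemma N_measurable[measurable]: "N t \<in> measurable M (count_space UNIV)"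
  using uniformized by (simp add: uniformized_chain_def poisson_process_def)

lemma X_measurable[measurable]: "X t \<in> measurable M (count_space UNIV)"
  unfolding ctmc_def[abs_def] by (rule measurable_compose_countable[OF Z_measurable N_measurable])

lemma X_path_measurable[measurable]: "finite S \<Longrightarrow> X_path S f \<in> sets M"
  unfolding X_path_def by measurable

lemma N_path_measurable[measurable]: "finite S \<Longrightarrow> N_path S g \<in> sets M"
  unfolding N_path_def by measurable

lemma N_0: "w \<in> space M \<Longrightarrow> N 0 w = 0"
  using uniformized by (simp add: uniformized_chain_def poisson_process_def)

lemma N_mono: "w \<in> space M \<Longrightarrow> 0 \<le> s \<Longrightarrow> s \<le> t \<Longrightarrow> N s w \<le> N t w"
  using uniformized by (simp add: uniformized_chain_def poisson_process_def)

lemma prob_Z_path: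
  "prob {w \<in> space M. \<forall>i\<le>n. Z i w = xs i} = p0 (xs 0) * (\<Prod>i<n. P (xs i) (xs (Suc i)))"
  using uniformized by (simp add: uniformized_chain_def markov_chain_def)

lemma prob_N_increments:
  "ts 0 = 0 \<Longrightarrow> (\<forall>i<k. ts i < ts (Suc i)) \<Longrightarrow>
   prob {w \<in> space M. \<forall>i<k. N (ts (Suc i)) w - N (ts i) w = ns i}
     = (\<Prod>i<k. poisson_weight (ts (Suc i) - ts i) (ns i))"
  using uniformized by (simp add: uniformized_chain_def poisson_process_def poisson_weight_def)

abbreviation Z_events :: "'w set set" where
  "Z_events \<equiv> {Z n -` A \<inter> space M | n A. True}"

abbreviation N_events :: "'w set set" where
  "N_events \<equiv> {N t -` A \<inter> space M | t A. 0 \<le> t}"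

lemma indep_Z_N: "indep_set (sigma_sets (space M) Z_events) (sigma_sets (space M) N_events)"
  using uniformized by (simp add: uniformized_chain_def)

lemma prob_Int_indep_Z_N:
  "A \<in> sigma_sets (space M) Z_events \<Longrightarrow> B \<in> sigma_sets (space M) N_events \<Longrightarrow>
   prob (A \<inter> B) = prob A * prob B"
  using indep_setD[OF indep_Z_N] by simp

lemma Z_path_in_sigma:
  "finite I \<Longrightarrow> {w \<in> space M. \<forall>i\<in>I. Z (n i) w = z i} \<in> sigma_sets (space M) Z_events"
proof (induction I rule: finite_induct)
  case (insert i I)
  have "{w \<in> space M. \<forall>i\<in>insert i I. Z (n i) w = z i}
      = (Z (n i) -` {z i} \<inter> space M) \<inter> {w \<in> space M. \<forall>i\<in>I. Z (n i) w = z i}"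
    by auto
  moreover have "Z (n i) -` {z i} \<inter> space M \<in> sigma_sets (space M) Z_events"
    by (rule sigma_sets.Basic) blast
  ultimately show ?case
    using insert.IH by (auto intro: Int_in_sigma_sets)
qed (simp add: sigma_sets_top)

lemma N_path_in_sigma:
  "finite S \<Longrightarrow> \<forall>v\<in>S. 0 \<le> v \<Longrightarrow> N_path S g \<in> sigma_sets (space M) N_events"
proof (induction S rule: finite_induct)
  case (insert v S)
  have "N_path (insert v S) g = (N v -` {g v} \<inter> space M) \<inter> N_path S g"
    by (auto simp: N_path_def)
  moreover have "N v -` {g v} \<inter> space M \<in> sigma_sets (space M) N_events"
    using insert.prems by (intro sigma_sets.Basic) blast
  ultimately show ?case
    using insert by (auto intro: Int_in_sigma_sets)
qed (simp add: N_path_def sigma_sets_top)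

definition Z_cylinder :: "nat \<Rightarrow> (nat \<Rightarrow> 's) \<Rightarrow> 'w set" where
  "Z_cylinder n xs = {w \<in> space M. \<forall>i\<le>n. Z i w = xs i}"

lemma Z_cylinder_measurable[measurable]: "Z_cylinder n xs \<in> sets M"
  unfolding Z_cylinder_def by measurable

lemma Z_cylinder_disjoint: "disjoint_family_on (Z_cylinder n) (PiE {..n} (\<lambda>_. UNIV))"
  unfolding disjoint_family_on_def Z_cylinder_def
  by (auto simp: PiE_def extensional_def fun_eq_iff) (metis not_le)

lemma finite_paths: "finite {xs \<in> PiE {..n::nat} (\<lambda>_. UNIV :: 's set). \<Phi> xs}"
proof (rule finite_subset)
  show "finite (PiE {..n} (\<lambda>_. UNIV :: 's set))"
    by (intro finite_PiE) auto
qed auto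

lemma Z_past_event_eq_Union:
  "{w \<in> space M. \<Phi> (restrict (\<lambda>i. Z i w) {..n})}
     = (\<Union>xs \<in> {xs \<in> PiE {..n} (\<lambda>_. UNIV). \<Phi> xs}. Z_cylinder n xs)"
proof safe
  fix w assume "w \<in> space M" "\<Phi> (restrict (\<lambda>i. Z i w) {..n})"
  then show "w \<in> (\<Union>xs \<in> {xs \<in> PiE {..n} (\<lambda>_. UNIV). \<Phi> xs}. Z_cylinder n xs)"
    by (intro UN_I[of "restrict (\<lambda>i. Z i w) {..n}"]) (auto simp: Z_cylinder_def)
next
  fix w xs assume "xs \<in> PiE {..n} (\<lambda>_. UNIV)" "\<Phi> xs" "w \<in> Z_cylinder n xs"
  moreover from this have "restrict (\<lambda>i. Z i w) {..n} = xs"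
    by (auto simp: Z_cylinder_def PiE_def extensional_def fun_eq_iff)
  ultimately show "\<Phi> (restrict (\<lambda>i. Z i w) {..n})" "w \<in> space M"
    by (auto simp: Z_cylinder_def)
qed

lemma Z_past_event_measurable[measurable]:
  "{w \<in> space M. \<Phi> (restrict (\<lambda>i. Z i w) {..n})} \<in> sets M"
  unfolding Z_past_event_eq_Union by (intro sets.finite_UN finite_paths) auto

lemma prob_Z_cylinder_step:
  "prob (Z_cylinder n xs \<inter> {w \<in> space M. Z (Suc n) w = x}) = prob (Z_cylinder n xs) * P (xs n) x"
proof -
  have "Z_cylinder n xs \<inter> {w \<in> space M. Z (Suc n) w = x} = Z_cylinder (Suc n) (xs(Suc n := x))"
    by (auto simp: Z_cylinder_def le_Suc_eq)
  then show ?thesis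
    by (simp add: Z_cylinder_def prob_Z_path mult.assoc)
qed

lemma prob_Z_markov_step:
  "prob {w \<in> space M. \<Phi> (restrict (\<lambda>i. Z i w) {..n}) \<and> Z n w = y \<and> Z (Suc n) w = x}
     = prob {w \<in> space M. \<Phi> (restrict (\<lambda>i. Z i w) {..n}) \<and> Z n w = y} * P y x"
proof -
  let ?A = "{xs \<in> PiE {..n} (\<lambda>_. UNIV). \<Phi> xs \<and> xs n = y}"
  let ?next = "{w \<in> space M. Z (Suc n) w = x}"
  have past: "{w \<in> space M. \<Phi> (restrict (\<lambda>i. Z i w) {..n}) \<and> Z n w = y} = (\<Union>xs\<in>?A. Z_cylinder n xs)"
    using Z_past_event_eq_Union[of "\<lambda>xs. \<Phi> xs \<and> xs n = y" n] by simp
  have "{w \<in> space M. \<Phi> (restrict (\<lambda>i. Z i w) {..n}) \<and> Z n w = y \<and> Z (Suc n) w = x}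
      = {w \<in> space M. \<Phi> (restrict (\<lambda>i. Z i w) {..n}) \<and> Z n w = y} \<inter> ?next"
    by auto
  also have "\<dots> = (\<Union>xs\<in>?A. Z_cylinder n xs \<inter> ?next)"
    unfolding past by blast
  finally have step: "{w \<in> space M. \<Phi> (restrict (\<lambda>i. Z i w) {..n}) \<and> Z n w = y \<and> Z (Suc n) w = x}
      = (\<Union>xs\<in>?A. Z_cylinder n xs \<inter> ?next)" .
  have disj: "disjoint_family_on (Z_cylinder n) ?A"
    using Z_cylinder_disjoint by (rule disjoint_family_on_mono[rotated]) auto
  have "prob (\<Union>xs\<in>?A. Z_cylinder n xs \<inter> ?next) = (\<Sum>xs\<in>?A. prob (Z_cylinder n xs \<inter> ?next))"
    by (intro finite_measure_finite_Union finite_paths) (use disj in \<open>auto simp: disjoint_family_on_def\<close>)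
  also have "\<dots> = (\<Sum>xs\<in>?A. prob (Z_cylinder n xs) * P y x)"
    by (intro sum.cong refl) (simp add: prob_Z_cylinder_step)
  also have "\<dots> = prob (\<Union>xs\<in>?A. Z_cylinder n xs) * P y x"
    by (subst finite_measure_finite_Union[OF finite_paths _ disj]) (auto simp: sum_distrib_right)
  finally show ?thesis
    unfolding step past .
qed

lemma prob_Z_markov:
  "prob {w \<in> space M. \<Phi> (restrict (\<lambda>i. Z i w) {..n}) \<and> Z n w = y \<and> Z (n + e) w = x}
     = prob {w \<in> space M. \<Phi> (restrict (\<lambda>i. Z i w) {..n}) \<and> Z n w = y} * mpow P e y x"
proof (induction e arbitrary: x)
  case 0
  show ?case
  proof (cases "x = y")
    case False
    then have "{w \<in> space M. \<Phi> (restrict (\<lambda>i. Z i w) {..n}) \<and> Z n w = y \<and> Z (n + 0) w = x} = {}"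
      by auto
    moreover have "mpow P 0 y x = 0"
      using False by simp
    ultimately show ?thesis
      by (simp only: measure_empty mult_zero_right)
  qed simp
next
  case (Suc e)
  let ?\<Psi> = "\<lambda>zs. \<Phi> (restrict zs {..n}) \<and> zs n = y"
  let ?E = "\<lambda>z. {w \<in> space M. ?\<Psi> (restrict (\<lambda>i. Z i w) {..n + e}) \<and> Z (n + e) w = z \<and> Z (Suc (n + e)) w = x}"
  have restrict: "restrict (restrict (\<lambda>i. Z i w) {..n + e}) {..n} = restrict (\<lambda>i. Z i w) {..n}" for w
    by (auto simp: fun_eq_iff)
  have eq: "{w \<in> space M. \<Phi> (restrict (\<lambda>i. Z i w) {..n}) \<and> Z n w = y \<and> Z (n + Suc e) w = x}
      = (\<Union>z. ?E z)"
    by (auto simp: restrict)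
  have "prob (\<Union>z. ?E z) = (\<Sum>z\<in>UNIV. prob (?E z))"
    by (intro finite_measure_finite_Union) (auto simp: disjoint_family_on_def)
  also have "\<dots> = (\<Sum>z\<in>UNIV.
      prob {w \<in> space M. \<Phi> (restrict (\<lambda>i. Z i w) {..n}) \<and> Z n w = y \<and> Z (n + e) w = z} * P z x)"
  proof (intro sum.cong refl)
    fix z
    have "prob (?E z) = prob {w \<in> space M. ?\<Psi> (restrict (\<lambda>i. Z i w) {..n + e}) \<and> Z (n + e) w = z} * P z x"
      by (rule prob_Z_markov_step)
    also have "{w \<in> space M. ?\<Psi> (restrict (\<lambda>i. Z i w) {..n + e}) \<and> Z (n + e) w = z}
        = {w \<in> space M. \<Phi> (restrict (\<lambda>i. Z i w) {..n}) \<and> Z n w = y \<and> Z (n + e) w = z}"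
      by (auto simp: restrict)
    finally show "prob (?E z)
        = prob {w \<in> space M. \<Phi> (restrict (\<lambda>i. Z i w) {..n}) \<and> Z n w = y \<and> Z (n + e) w = z} * P z x" .
  qed
  also have "\<dots> = prob {w \<in> space M. \<Phi> (restrict (\<lambda>i. Z i w) {..n}) \<and> Z n w = y} * mpow P (Suc e) y x"
    by (simp only: Suc mpow.simps sum_distrib_left mult.assoc)
  finally show ?case
    unfolding eq .
qed

lemma N_step_mono:
  assumes "w \<in> space M" "ts 0 = 0" "\<forall>i<k. ts i < ts (Suc i)" "i < k"
  shows "N (ts i) w \<le> N (ts (Suc i)) w"
proof (rule N_mono[OF assms(1)])
  show "0 \<le> ts i"
    using increasing_from_0_nonneg[OF assms(2,3)] assms(4) by simp
  show "ts i \<le> ts (Suc i)"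
    using assms(3,4) by (simp add: less_imp_le)
qed

lemma N_path_empty:
  assumes "ts 0 = 0" "\<forall>i<k. ts i < ts (Suc i)" "\<not> (c 0 = 0 \<and> (\<forall>i<k. c i \<le> c (Suc i)))"
  shows "{w \<in> space M. \<forall>i\<le>k. N (ts i) w = c i} = {}"
proof (rule ccontr)
  assume "{w \<in> space M. \<forall>i\<le>k. N (ts i) w = c i} \<noteq> {}"
  then obtain w where w: "w \<in> space M" "\<forall>i\<le>k. N (ts i) w = c i"
    by auto
  have "c 0 = 0"
    using w N_0 assms(1) by (metis le0)
  moreover have "c i \<le> c (Suc i)" if "i < k" for i
    using N_step_mono[OF w(1) assms(1,2) that] w(2) that by simp
  ultimately show False
    using assms(3) by auto
qed

lemma N_path_eq_increments:
  assumes "ts 0 = 0" "\<forall>i<k. ts i < ts (Suc i)" "c 0 = 0" "\<forall>i<k. c i \<le> c (Suc i)"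
  shows "{w \<in> space M. \<forall>i\<le>k. N (ts i) w = c i}
       = {w \<in> space M. \<forall>i<k. N (ts (Suc i)) w - N (ts i) w = c (Suc i) - c i}"
proof safe
  fix w i
  assume "w \<in> space M" "\<forall>i<k. N (ts (Suc i)) w - N (ts i) w = c (Suc i) - c i" "i \<le> k"
  then show "N (ts i) w = c i"
  proof (induction i)
    case 0
    then show ?case
      using N_0 assms by simp
  next
    case (Suc i)
    then have "N (ts i) w = c i"
      by simp
    moreover have "N (ts i) w \<le> N (ts (Suc i)) w" "c i \<le> c (Suc i)"
      using N_step_mono[OF Suc.prems(1) assms(1,2)] assms(4) Suc.prems(3) by auto
    ultimately show ?case
      using Suc.prems(2)[rule_format, of i] Suc.prems(3) by simp
  qed
qed simp

lemma prob_N_path: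
  assumes ts: "ts 0 = 0" "\<forall>i<k. ts i < ts (Suc i)"
  shows "prob {w \<in> space M. \<forall>i\<le>k. N (ts i) w = c i}
    = (if c 0 = 0 \<and> (\<forall>i<k. c i \<le> c (Suc i))
       then \<Prod>i<k. poisson_weight (ts (Suc i) - ts i) (c (Suc i) - c i) else 0)"
proof (cases "c 0 = 0 \<and> (\<forall>i<k. c i \<le> c (Suc i))")
  case True
  then show ?thesis
    using N_path_eq_increments[OF ts] prob_N_increments[OF ts] by simp
next
  case False
  then show ?thesis
    unfolding N_path_empty[OF ts False] by (subst if_not_P[OF False]) simp
qed

lemma prob_N_path_Suc:
  assumes ts: "ts 0 = 0" "\<forall>i<Suc k. ts i < ts (Suc i)"
  shows "prob {w \<in> space M. \<forall>i\<le>Suc k. N (ts i) w = c i}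
     = prob {w \<in> space M. \<forall>i\<le>k. N (ts i) w = c i} *
       (if c k \<le> c (Suc k) then poisson_weight (ts (Suc k) - ts k) (c (Suc k) - c k) else 0)"
proof -
  have ts': "\<forall>i<k. ts i < ts (Suc i)"
    using ts(2) by simp
  have "(\<forall>i<Suc k. c i \<le> c (Suc i)) \<longleftrightarrow> (\<forall>i<k. c i \<le> c (Suc i)) \<and> c k \<le> c (Suc k)"
    by (auto simp: less_Suc_eq)
  then show ?thesis
    unfolding prob_N_path[OF ts] prob_N_path[OF ts(1) ts'] by auto
qed

lemma prob_N_path_extend:
  assumes S: "finite S" "\<forall>v\<in>S. 0 \<le> v" "m \<in> S" "\<forall>v\<in>S. v \<le> m" and "m < t"
  shows "prob (N_path S g \<inter> {w \<in> space M. N t w = j})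
       = prob (N_path S g) * (if g m \<le> j then poisson_weight (t - m) (j - g m) else 0)"
proof -
  \<comment> \<open>Since \<open>N 0 = 0\<close>, observing also the time \<open>0\<close> costs nothing and puts the observation
    times in the form required by \<open>prob_N_increments\<close>.\<close>
  have "Min (insert 0 S) = 0" "Max (insert 0 S) = m"
    using S by (auto intro!: Min_eqI Max_eqI)
  then obtain k ts where k: "ts ` {..k} = insert 0 S" "\<forall>i<k. ts i < ts (Suc i)" "ts 0 = 0" "ts k = m"
    using finite_strict_enumeration[of "insert 0 S"] S by auto
  define ts' where "ts' = ts(Suc k := t)"
  define c where "c i = (if i \<le> k then (if ts i \<in> S then g (ts i) else 0) else j)" for i
  have ts': "ts' 0 = 0" "\<forall>i<Suc k. ts' i < ts' (Suc i)"
    using k \<open>m < t\<close> by (auto simp: ts'_def less_Suc_eq)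
  have iff: "(\<forall>v\<in>S. N v w = g v) \<longleftrightarrow> (\<forall>i\<le>k. N (ts' i) w = c i)" if "w \<in> space M" for w
  proof -
    have "(\<forall>v\<in>S. N v w = g v) \<longleftrightarrow> (\<forall>v\<in>ts ` {..k}. N v w = (if v \<in> S then g v else 0))"
      using N_0[OF that] k(1) by auto
    then show ?thesis
      by (auto simp: c_def ts'_def)
  qed
  have path: "N_path S g = {w \<in> space M. \<forall>i\<le>k. N (ts' i) w = c i}"
    using iff by (auto simp: N_path_def)
  have "(\<forall>i\<le>Suc k. N (ts' i) w = c i) \<longleftrightarrow> (\<forall>i\<le>k. N (ts' i) w = c i) \<and> N t w = j" for w
    by (auto simp: le_Suc_eq c_def ts'_def)
  then have path_t: "N_path S g \<inter> {w \<in> space M. N t w = j} = {w \<in> space M. \<forall>i\<le>Suc k. N (ts' i) w = c i}"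
    unfolding path by auto
  have "c k = g m" "c (Suc k) = j"
    using k S by (auto simp: c_def)
  then show ?thesis
    unfolding path_t unfolding path prob_N_path_Suc[OF ts'] using k by (simp add: ts'_def)
qed

lemma prob_N_path_Z_path_jump:
  fixes f :: "real \<Rightarrow> 's"
  assumes S: "finite S" "\<forall>v\<in>S. 0 \<le> v" "m \<in> S" "\<forall>v\<in>S. v \<le> m" and "m < t"
    and g: "\<forall>v\<in>S. g v \<le> g m"
  defines "ZA \<equiv> {w \<in> space M. \<forall>v\<in>S. Z (g v) w = f v}"
  shows "prob (N_path S g \<inter> ZA \<inter> {w \<in> space M. N t w = g m + e \<and> Z (g m + e) w = x})
       = prob (N_path S g \<inter> ZA) * (poisson_weight (t - m) e * mpow P e (f m) x)"
proof -
  let ?NT = "{w \<in> space M. N t w = g m + e}" and ?ZT = "{w \<in> space M. Z (g m + e) w = x}"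
  have "N_path S g \<inter> ?NT = N_path (insert t S) (g(t := g m + e))"
    using S(4) \<open>m < t\<close> by (auto simp: N_path_def)
  moreover have "0 \<le> t"
    using S \<open>m < t\<close> by force
  ultimately have N_sigma: "N_path S g \<in> sigma_sets (space M) N_events"
    "N_path S g \<inter> ?NT \<in> sigma_sets (space M) N_events"
    using N_path_in_sigma S by auto
  have Z_sigma: "ZA \<in> sigma_sets (space M) Z_events" "?ZT \<in> sigma_sets (space M) Z_events"
    using Z_path_in_sigma[of S g f] Z_path_in_sigma[of "{0::nat}" "\<lambda>_. g m + e" "\<lambda>_. x"] S(1)
    by (simp_all add: ZA_def)
  then have "ZA \<inter> ?ZT \<in> sigma_sets (space M) Z_events"
    by (intro Int_in_sigma_sets) auto
  let ?\<Phi> = "\<lambda>zs. \<forall>v\<in>S. zs (g v) = f v"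
  have "ZA \<inter> ?ZT
      = {w \<in> space M. ?\<Phi> (restrict (\<lambda>i. Z i w) {..g m}) \<and> Z (g m) w = f m \<and> Z (g m + e) w = x}"
    "ZA = {w \<in> space M. ?\<Phi> (restrict (\<lambda>i. Z i w) {..g m}) \<and> Z (g m) w = f m}"
    using g S(3) by (auto simp: ZA_def)
  then have Z_step: "prob (ZA \<inter> ?ZT) = prob ZA * mpow P e (f m) x"
    using prob_Z_markov[of ?\<Phi> "g m" "f m" e x] by simp
  have "N_path S g \<inter> ZA \<inter> {w \<in> space M. N t w = g m + e \<and> Z (g m + e) w = x}
      = (ZA \<inter> ?ZT) \<inter> (N_path S g \<inter> ?NT)"
    by auto
  then have "prob (N_path S g \<inter> ZA \<inter> {w \<in> space M. N t w = g m + e \<and> Z (g m + e) w = x})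
      = prob (ZA \<inter> ?ZT) * prob (N_path S g \<inter> ?NT)"
    using prob_Int_indep_Z_N[OF \<open>ZA \<inter> ?ZT \<in> _\<close> N_sigma(2)] by simp
  also have "\<dots> = prob ZA * prob (N_path S g) * (poisson_weight (t - m) e * mpow P e (f m) x)"
    using prob_N_path_extend[OF S \<open>m < t\<close>, of g "g m + e"] Z_step by simp
  also have "prob ZA * prob (N_path S g) = prob (N_path S g \<inter> ZA)"
    using prob_Int_indep_Z_N[OF Z_sigma(1) N_sigma(1)] by (simp add: Int_commute)
  finally show ?thesis .
qed

lemma disjoint_family_on_N_path: "disjoint_family_on (\<lambda>g. N_path S g \<inter> A g) (S \<rightarrow>\<^sub>E B)"
  unfolding disjoint_family_on_def
proof (intro ballI impI)
  fix g g'
  assume "g \<in> S \<rightarrow>\<^sub>E B" "g' \<in> S \<rightarrow>\<^sub>E B" "g \<noteq> g'"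
  then obtain v where "v \<in> S" "g v \<noteq> g' v"
    by (auto simp: PiE_def extensional_def fun_eq_iff) metis
  then show "(N_path S g \<inter> A g) \<inter> (N_path S g' \<inter> A g') = {}"
    by (auto simp: N_path_def)
qed

lemma X_path_N_eq_Union:
  assumes "\<forall>v\<in>S. 0 \<le> v" "m \<in> S" "\<forall>v\<in>S. v \<le> m"
  shows "X_path S f \<inter> {w \<in> space M. N m w = j}
    = (\<Union>g\<in>{g \<in> S \<rightarrow>\<^sub>E {..j}. g m = j}. N_path S g \<inter> {w \<in> space M. \<forall>v\<in>S. Z (g v) w = f v})"
proof (intro equalityI subsetI)
  fix w
  assume w: "w \<in> X_path S f \<inter> {w \<in> space M. N m w = j}"
  show "w \<in> (\<Union>g\<in>{g \<in> S \<rightarrow>\<^sub>E {..j}. g m = j}. N_path S g \<inter> {w \<in> space M. \<forall>v\<in>S. Z (g v) w = f v})"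
  proof (rule UN_I[of "restrict (\<lambda>v. N v w) S"])
    show "restrict (\<lambda>v. N v w) S \<in> {g \<in> S \<rightarrow>\<^sub>E {..j}. g m = j}"
      using w N_mono assms by (auto simp: X_path_def)
    show "w \<in> N_path S (restrict (\<lambda>v. N v w) S)
        \<inter> {w' \<in> space M. \<forall>v\<in>S. Z (restrict (\<lambda>v. N v w) S v) w' = f v}"
      using w by (auto simp: X_path_def N_path_def ctmc_def)
  qed
qed (use assms(2) in \<open>auto simp: X_path_def N_path_def ctmc_def\<close>)

lemma prob_X_path_N_jump:
  assumes S: "finite S" "\<forall>v\<in>S. 0 \<le> v" "m \<in> S" "\<forall>v\<in>S. v \<le> m" and "m < t"
  shows "prob (X_path S f \<inter> {w \<in> space M. N m w = j \<and> N t w = j + e \<and> Z (j + e) w = x})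
       = prob (X_path S f \<inter> {w \<in> space M. N m w = j}) * (poisson_weight (t - m) e * mpow P e (f m) x)"
proof -
  let ?G = "{g \<in> S \<rightarrow>\<^sub>E {..j}. g m = j}"
  let ?ZA = "\<lambda>g. {w \<in> space M. \<forall>v\<in>S. Z (g v) w = f v}"
  let ?jump = "{w \<in> space M. N t w = j + e \<and> Z (j + e) w = x}"
  let ?c = "poisson_weight (t - m) e * mpow P e (f m) x"
  have G: "finite ?G"
    by (rule finite_subset[of _ "S \<rightarrow>\<^sub>E {..j}"]) (auto intro!: finite_PiE S)
  have disjoint: "disjoint_family_on (\<lambda>g. N_path S g \<inter> ?ZA g) ?G"
    by (rule disjoint_family_on_mono[OF _ disjoint_family_on_N_path]) auto
  have measurable: "N_path S g \<inter> ?ZA g \<in> sets M" for g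
    using S by measurable
  have "?jump \<in> sets M"
    by measurable
  have "prob (X_path S f \<inter> {w \<in> space M. N m w = j \<and> N t w = j + e \<and> Z (j + e) w = x})
      = prob (\<Union>g\<in>?G. N_path S g \<inter> ?ZA g \<inter> ?jump)"
    using X_path_N_eq_Union[OF S(2-4), of f j] by (intro arg_cong[where f = prob]) blast
  also have "\<dots> = (\<Sum>g\<in>?G. prob (N_path S g \<inter> ?ZA g \<inter> ?jump))"
    using measurable \<open>?jump \<in> sets M\<close> disjoint
    by (intro finite_measure_finite_Union G) (auto simp: disjoint_family_on_def)
  also have "\<dots> = (\<Sum>g\<in>?G. prob (N_path S g \<inter> ?ZA g) * ?c)"
  proof (intro sum.cong refl)
    fix g
    assume "g \<in> ?G"
    then have "g m = j" "\<forall>v\<in>S. g v \<le> g m"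
      by (auto simp: PiE_iff)
    then show "prob (N_path S g \<inter> ?ZA g \<inter> ?jump) = prob (N_path S g \<inter> ?ZA g) * ?c"
      using prob_N_path_Z_path_jump[OF S \<open>m < t\<close>, of g f e x] by simp
  qed
  also have "\<dots> = prob (X_path S f \<inter> {w \<in> space M. N m w = j}) * ?c"
    unfolding X_path_N_eq_Union[OF S(2-4)] using measurable
    by (subst finite_measure_finite_Union[OF G _ disjoint]) (auto simp: sum_distrib_right)
  finally show ?thesis .
qed

lemma prob_X_path_N_extend:
  assumes S: "finite S" "\<forall>v\<in>S. 0 \<le> v" "m \<in> S" "\<forall>v\<in>S. v \<le> m" and "m < t"
  shows "prob (X_path S f \<inter> {w \<in> space M. N m w = j \<and> X t w = x})
       = prob (X_path S f \<inter> {w \<in> space M. N m w = j}) * uniformized_kernel P (t - m) (f m) x"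
proof -
  let ?E = "\<lambda>e. X_path S f \<inter> {w \<in> space M. N m w = j \<and> N t w = j + e \<and> Z (j + e) w = x}"
  have "0 \<le> m"
    using S by auto
  have union: "X_path S f \<inter> {w \<in> space M. N m w = j \<and> X t w = x} = (\<Union>e. ?E e)"
  proof (intro equalityI subsetI)
    fix w
    assume w: "w \<in> X_path S f \<inter> {w \<in> space M. N m w = j \<and> X t w = x}"
    then have "j \<le> N t w"
      using N_mono[of w m t] \<open>0 \<le> m\<close> \<open>m < t\<close> by auto
    with w have "w \<in> ?E (N t w - j)"
      by (auto simp: ctmc_def)
    then show "w \<in> (\<Union>e. ?E e)"
      by blast
  qed (auto simp: ctmc_def)
  have "?E e \<in> sets M" for e
    using S by measurable
  then have "(\<lambda>e. prob (?E e)) sums prob (X_path S f \<inter> {w \<in> space M. N m w = j \<and> X t w = x})"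
    unfolding union by (intro finite_measure_UNION) (auto simp: disjoint_family_on_def)
  moreover have "(\<lambda>e. prob (?E e)) sums
      (prob (X_path S f \<inter> {w \<in> space M. N m w = j}) * uniformized_kernel P (t - m) (f m) x)"
    unfolding prob_X_path_N_jump[OF S \<open>m < t\<close>] using \<open>m < t\<close>
    by (intro sums_mult uniformized_kernel_sums[OF stochastic]) simp
  ultimately show ?thesis
    by (rule sums_unique2)
qed

lemma prob_X_path_extend:
  assumes S: "finite S" "\<forall>v\<in>S. 0 \<le> v" "m \<in> S" "\<forall>v\<in>S. v \<le> m" and "m \<le> t"
  shows "prob (X_path S f \<inter> {w \<in> space M. X t w = x}) = prob (X_path S f) * uniformized_kernel P (t - m) (f m) x"
proof (cases "m = t")
  case True
  show ?thesis
  proof (cases "f m = x")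
    case True
    then have "X_path S f \<inter> {w \<in> space M. X t w = x} = X_path S f"
      using \<open>m = t\<close> S(3) by (auto simp: X_path_def)
    then show ?thesis
      using \<open>m = t\<close> True by (simp add: uniformized_kernel_0)
  next
    case False
    then have "X_path S f \<inter> {w \<in> space M. X t w = x} = {}"
      using \<open>m = t\<close> S(3) by (auto simp: X_path_def)
    then show ?thesis
      using \<open>m = t\<close> False by (simp add: uniformized_kernel_0)
  qed
next
  case False
  let ?K = "uniformized_kernel P (t - m) (f m) x"
  let ?E = "\<lambda>j. X_path S f \<inter> {w \<in> space M. N m w = j}"
  let ?EX = "\<lambda>j. X_path S f \<inter> {w \<in> space M. N m w = j \<and> X t w = x}"
  have "?E j \<in> sets M" for j
    using S by measurable
  then have "(\<lambda>j. prob (?E j)) sums prob (\<Union>j. ?E j)"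
    by (intro finite_measure_UNION) (auto simp: disjoint_family_on_def)
  moreover have "?EX j \<in> sets M" for j
    using S by measurable
  then have "(\<lambda>j. prob (?EX j)) sums prob (\<Union>j. ?EX j)"
    by (intro finite_measure_UNION) (auto simp: disjoint_family_on_def)
  moreover have "(\<Union>j. ?E j) = X_path S f" "(\<Union>j. ?EX j) = X_path S f \<inter> {w \<in> space M. X t w = x}"
    by (auto simp: X_path_def)
  ultimately have E: "(\<lambda>j. prob (?E j)) sums prob (X_path S f)"
    and EX: "(\<lambda>j. prob (?EX j)) sums prob (X_path S f \<inter> {w \<in> space M. X t w = x})"
    by simp_all
  have "m < t"
    using False \<open>m \<le> t\<close> by simp
  have "(\<lambda>j. prob (?EX j)) sums (prob (X_path S f) * ?K)"
    unfolding prob_X_path_N_extend[OF S \<open>m < t\<close>] by (intro sums_mult2 E)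
  with EX show ?thesis
    by (rule sums_unique2)
qed

lemma prob_X_path_insert:
  assumes "finite S" "\<forall>v\<in>S. 0 \<le> v" "m \<in> S" "\<forall>v\<in>S. v \<le> m" "m \<le> t"
  shows "prob (X_path (insert t S) f) = prob (X_path S f) * uniformized_kernel P (t - m) (f m) (f t)"
proof -
  have "X_path (insert t S) f = X_path S f \<inter> {w \<in> space M. X t w = f t}"
    by (auto simp: X_path_def)
  then show ?thesis
    using prob_X_path_extend[OF assms] by simp
qed

definition law :: "real \<Rightarrow> 's \<Rightarrow> real" where
  "law t y = prob {w \<in> space M. X t w = y}"

lemma law_nonneg: "0 \<le> law t y"
  by (simp add: law_def)

lemma law_0: "law 0 y = p0 y"
proof -
  have "{w \<in> space M. X 0 w = y} = {w \<in> space M. \<forall>i\<le>0. Z i w = (\<lambda>_. y) i}"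
    by (auto simp: ctmc_def N_0)
  then show ?thesis
    using prob_Z_path[of 0 "\<lambda>_. y"] by (simp add: law_def)
qed

lemma prob_X_two_times:
  assumes "0 \<le> a" "a \<le> b"
  shows "prob {w \<in> space M. X a w = z \<and> X b w = x} = law a z * uniformized_kernel P (b - a) z x"
proof -
  have "{w \<in> space M. X a w = z \<and> X b w = x} = X_path {a} (\<lambda>_. z) \<inter> {w \<in> space M. X b w = x}"
    "{w \<in> space M. X a w = z} = X_path {a} (\<lambda>_. z)"
    by (auto simp: X_path_def)
  then show ?thesis
    using prob_X_path_extend[of "{a}" a b "\<lambda>_. z" x] assms by (simp add: law_def)
qed

lemma law_kernel:
  assumes "0 \<le> a" "a \<le> b"
  shows "law b x = (\<Sum>z\<in>UNIV. law a z * uniformized_kernel P (b - a) z x)"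
proof -
  have "{w \<in> space M. X b w = x} = (\<Union>z. {w \<in> space M. X a w = z \<and> X b w = x})"
    by auto
  then have "law b x = (\<Sum>z\<in>UNIV. prob {w \<in> space M. X a w = z \<and> X b w = x})"
    unfolding law_def by (auto intro: finite_measure_finite_Union simp: disjoint_family_on_def)
  then show ?thesis
    using prob_X_two_times[OF assms] by simp
qed

lemma sum_law: "(\<Sum>y\<in>UNIV. law t y) = 1"
proof -
  have "(\<Sum>y\<in>UNIV. law t y) = prob (\<Union>y. {w \<in> space M. X t w = y})"
    unfolding law_def by (rule finite_measure_finite_Union[symmetric]) (auto simp: disjoint_family_on_def)
  also have "(\<Union>y. {w \<in> space M. X t w = y}) = space M"
    by auto
  finally show ?thesis
    using prob_space by simp
qed

lemma law_pos:
  assumes "\<And>y. 0 < p0 y" "0 \<le> t"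
  shows "0 < law t y"
proof -
  have "0 < p0 y * (poisson_weight t 0 * mpow P 0 y y)"
    using assms by (simp add: poisson_weight_def)
  also have "\<dots> \<le> law 0 y * uniformized_kernel P t y y"
    using uniformized_kernel_ge_term[OF stochastic assms(2), of 0 y y] assms(1)[of y]
    by (simp add: law_0 mult_left_mono less_imp_le)
  also have "\<dots> \<le> (\<Sum>z\<in>UNIV. law 0 z * uniformized_kernel P t z y)"
    using assms(2) by (intro member_le_sum) (auto intro: mult_nonneg_nonneg law_nonneg uniformized_kernel_nonneg[OF stochastic])
  also have "\<dots> = law t y"
    using law_kernel[of 0 t y] assms(2) by simp
  finally show ?thesis .
qed

lemma law_invariant:
  assumes "invariant_distribution P p0" "0 \<le> t"
  shows "law t y = p0 y"
  using law_kernel[of 0 t y] uniformized_kernel_invariant[OF stochastic assms(1,2)] assms(2)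
  by (simp add: law_0)

lemma law_tendsto_invariant:
  assumes "irreducible_matrix P" "invariant_distribution P q"
  shows "((\<lambda>t. law t y) \<longlongrightarrow> q y) at_top"
proof (rule doeblin_tendsto[where K = "uniformized_kernel P 1"])
  show "law t y = (\<Sum>x\<in>UNIV. law (t - 1) x * uniformized_kernel P 1 x y)" if "1 \<le> t" for t y
    using law_kernel[of "t - 1" t y] that by simp
  show "(\<Sum>x\<in>UNIV. q x * uniformized_kernel P 1 x y) = q y" for y
    using uniformized_kernel_invariant[OF stochastic assms(2)] by simp
qed (use assms stochastic in \<open>auto simp: law_nonneg sum_law uniformized_kernel_row_sum uniformized_kernel_pos
      invariant_distribution_def\<close>)

subsection \<open>Conditional independence of past and future\<close>

lemma prob_X_path_future_factor:
  assumes "0 \<le> b" "finite V" "\<forall>v\<in>V. b < v"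
  shows "\<exists>c. \<forall>W. finite W \<longrightarrow> (\<forall>v\<in>W. 0 \<le> v \<and> v \<le> b) \<longrightarrow> b \<in> W \<longrightarrow>
    prob (X_path (W \<union> V) f) = prob (X_path W f) * c"
  using assms(2,3)
proof (induction V rule: finite_linorder_max_induct)
  case empty
  show ?case
    by (intro exI[of _ 1]) simp
next
  case (insert m V)
  then obtain c where c: "\<And>W. finite W \<Longrightarrow> \<forall>v\<in>W. 0 \<le> v \<and> v \<le> b \<Longrightarrow> b \<in> W \<Longrightarrow>
      prob (X_path (W \<union> V) f) = prob (X_path W f) * c"
    by auto
  let ?m' = "Max (insert b V)"
  have fin: "finite (insert b V)"
    using insert by simp
  have m': "?m' \<in> insert b V" "\<And>v. v \<in> insert b V \<Longrightarrow> v \<le> ?m'"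
    using Max_in[OF fin] Max_ge[OF fin] by auto
  have "?m' \<le> m"
    using m'(1) insert by auto
  show ?case
  proof (intro exI[of _ "c * uniformized_kernel P (m - ?m') (f ?m') (f m)"] allI impI)
    fix W
    assume W: "finite W" "\<forall>v\<in>W. 0 \<le> v \<and> v \<le> b" "b \<in> W"
    have "finite (W \<union> V)"
      using W insert by simp
    moreover have "\<forall>v\<in>W \<union> V. 0 \<le> v"
      using W insert \<open>0 \<le> b\<close> by force
    moreover have "?m' \<in> W \<union> V"
      using m'(1) W by auto
    moreover have "v \<le> ?m'" if "v \<in> W \<union> V" for v
    proof (cases "v \<in> W")
      case True
      then have "v \<le> b"
        using W by auto
      also have "b \<le> ?m'"
        by (rule m'(2)) simp
      finally show ?thesis .
    qed (use that m'(2) in auto)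
    ultimately have "prob (X_path (insert m (W \<union> V)) f)
        = prob (X_path (W \<union> V) f) * uniformized_kernel P (m - ?m') (f ?m') (f m)"
      using prob_X_path_insert \<open>?m' \<le> m\<close> by blast
    then show "prob (X_path (W \<union> insert m V) f) = prob (X_path W f) * (c * uniformized_kernel P (m - ?m') (f ?m') (f m))"
      using c[OF W] by simp
  qed
qed

lemma prob_cond_indep_X_path:
  assumes ab: "0 \<le> a" "a < b" and V: "finite V" "\<forall>v\<in>V. b \<le> v"
  shows "prob (X_path V y \<inter> {w \<in> space M. X a w = z \<and> X b w = x}) * prob {w \<in> space M. X b w = x}
       = prob {w \<in> space M. X a w = z \<and> X b w = x} * prob (X_path V y \<inter> {w \<in> space M. X b w = x})"
proof (cases "b \<in> V \<and> y b \<noteq> x")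
  case True
  then have "X_path V y \<inter> {w \<in> space M. X a w = z \<and> X b w = x} = {}"
    "X_path V y \<inter> {w \<in> space M. X b w = x} = {}"
    by (auto simp: X_path_def)
  then show ?thesis
    by simp
next
  case False
  let ?V = "V - {b}" and ?f = "y(a := z, b := x)"
  have "0 \<le> b" "finite ?V" "\<forall>v\<in>?V. b < v"
    using ab V by force+
  then obtain c where c: "\<And>W. finite W \<Longrightarrow> \<forall>v\<in>W. 0 \<le> v \<and> v \<le> b \<Longrightarrow> b \<in> W \<Longrightarrow>
      prob (X_path (W \<union> ?V) ?f) = prob (X_path W ?f) * c"
    using prob_X_path_future_factor[of b ?V ?f] by blast
  have "a \<notin> V"
    using V ab by force
  then have f: "?f a = z" "?f b = x" "\<And>v. v \<in> ?V \<Longrightarrow> ?f v = y v"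
    using ab by auto
  have "X_path V y \<inter> {w \<in> space M. X a w = z \<and> X b w = x} = X_path ({a, b} \<union> ?V) ?f"
    "X_path V y \<inter> {w \<in> space M. X b w = x} = X_path ({b} \<union> ?V) ?f"
    using False f by (auto simp: X_path_def)
  moreover have "{w \<in> space M. X a w = z \<and> X b w = x} = X_path {a, b} ?f"
    "{w \<in> space M. X b w = x} = X_path {b} ?f"
    using f by (auto simp: X_path_def)
  moreover have "prob (X_path ({a, b} \<union> ?V) ?f) = prob (X_path {a, b} ?f) * c"
    "prob (X_path ({b} \<union> ?V) ?f) = prob (X_path {b} ?f) * c"
    using c[of "{a, b}"] c[of "{b}"] ab by simp_all
  ultimately show ?thesis
    by simp
qed

definition future_cylinders :: "real \<Rightarrow> real \<Rightarrow> 'w set set" where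
  "future_cylinders b T = insert {} {X_path V y | V y. finite V \<and> V \<subseteq> {b..T}}"

lemma future_cylinders_Pow: "future_cylinders b T \<subseteq> Pow (space M)"
  by (auto simp: future_cylinders_def X_path_def)

lemma future_cylinders_sets: "future_cylinders b T \<subseteq> sets M"
  by (auto simp: future_cylinders_def)

lemma sigma_sets_future_cylinders: "sigma_sets (space M) (future_cylinders b T) \<subseteq> sets M"
  using future_cylinders_sets by (rule sets.sigma_sets_subset)

lemma Int_stable_future_cylinders: "Int_stable (future_cylinders b T)"
  unfolding Int_stable_def
proof (intro ballI)
  fix A B
  assume A: "A \<in> future_cylinders b T" and B: "B \<in> future_cylinders b T"
  show "A \<inter> B \<in> future_cylinders b T"
  proof (cases "A = {} \<or> B = {}")
    case False
    then obtain V1 y1 V2 y2 where 1: "A = X_path V1 y1" "finite V1" "V1 \<subseteq> {b..T}"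
      and 2: "B = X_path V2 y2" "finite V2" "V2 \<subseteq> {b..T}"
      using A B by (auto simp: future_cylinders_def)
    show ?thesis
    proof (cases "\<exists>v\<in>V1 \<inter> V2. y1 v \<noteq> y2 v")
      case True
      then have "A \<inter> B = {}"
        using 1 2 by (auto simp: X_path_def)
      then show ?thesis
        by (simp add: future_cylinders_def)
    next
      case False
      then have "A \<inter> B = X_path (V1 \<union> V2) (\<lambda>v. if v \<in> V1 then y1 v else y2 v)"
        using 1 2 by (auto simp: X_path_def)
      then show ?thesis
        using 1 2 unfolding future_cylinders_def by blast
    qed
  qed (auto simp: future_cylinders_def)
qed

lemma prob_cond_indep_future:
  assumes "0 \<le> a" "a < b" "A \<in> sigma_sets (space M) (future_cylinders b T)"
  shows "prob (A \<inter> {w \<in> space M. X a w = z \<and> X b w = x}) * prob {w \<in> space M. X b w = x}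
       = prob {w \<in> space M. X a w = z \<and> X b w = x} * prob (A \<inter> {w \<in> space M. X b w = x})"
proof (rule measure_Int_proportional_sigma_sets[OF Int_stable_future_cylinders future_cylinders_Pow
      sigma_sets_future_cylinders _ _ _ assms(3)])
  show "{w \<in> space M. X a w = z \<and> X b w = x} \<in> sets M"
    by measurable
  show "{w \<in> space M. X b w = x} \<in> sets M"
    by measurable
next
  fix A
  assume "A \<in> future_cylinders b T"
  then consider "A = {}" | V y where "A = X_path V y" "finite V" "V \<subseteq> {b..T}"
    by (auto simp: future_cylinders_def)
  then show "prob (A \<inter> {w \<in> space M. X a w = z \<and> X b w = x}) * prob {w \<in> space M. X b w = x}
      = prob {w \<in> space M. X a w = z \<and> X b w = x} * prob (A \<inter> {w \<in> space M. X b w = x})"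
  proof cases
    case 2
    moreover have "\<forall>v\<in>V. b \<le> v"
      using 2 by auto
    ultimately show ?thesis
      using prob_cond_indep_X_path[OF assms(1,2), of V y z x] by simp
  qed simp
qed

abbreviation rev_generator :: "real \<Rightarrow> real \<Rightarrow> 'w set set" where
  "rev_generator T s \<equiv> {X (T - u) -` A \<inter> space M | u A. 0 \<le> u \<and> u \<le> s}"

lemma sets_rev_filtration: "sets (rev_filtration M X T s) = sigma_sets (space M) (rev_generator T s)"
  unfolding rev_filtration_def by (rule sets_measure_of) auto

lemma space_rev_filtration: "space (rev_filtration M X T s) = space M"
  unfolding rev_filtration_def by (rule space_measure_of) auto

lemma subalgebra_rev_filtration: "subalgebra M (rev_filtration M X T s)"
proof -
  have "rev_generator T s \<subseteq> sets M"
  proof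
    fix B
    assume "B \<in> rev_generator T s"
    then obtain u A where "B = X (T - u) -` A \<inter> space M"
      by blast
    then show "B \<in> sets M"
      using measurable_sets[OF X_measurable, of A "T - u"] by simp
  qed
  then show ?thesis
    unfolding subalgebra_def sets_rev_filtration space_rev_filtration
    using sets.sigma_sets_subset by blast
qed

lemma sets_rev_filtration_mono:
  "s \<le> u \<Longrightarrow> sets (rev_filtration M X T s) \<subseteq> sets (rev_filtration M X T u)"
  unfolding sets_rev_filtration by (rule sigma_sets_mono') fastforce

lemma X_measurable_rev_filtration:
  assumes "0 \<le> s"
  shows "X (T - s) \<in> measurable (rev_filtration M X T s) (count_space UNIV)"
proof -
  have "X (T - s) -` {y} \<inter> space M \<in> rev_generator T s" for y
    using assms by blast
  then show ?thesis
    unfolding measurable_count_space_eq2_countable space_rev_filtration sets_rev_filtration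
    by (auto intro: sigma_sets.Basic)
qed

lemma rev_filtration_future_cylinders:
  assumes "0 \<le> s"
  shows "sets (rev_filtration M X T s) \<subseteq> sigma_sets (space M) (future_cylinders (T - s) T)"
  unfolding sets_rev_filtration
proof (rule sigma_sets_mono, rule subsetI)
  fix B
  assume "B \<in> rev_generator T s"
  then obtain u A where B: "B = X (T - u) -` A \<inter> space M" "0 \<le> u" "u \<le> s"
    by auto
  have "B = (\<Union>y\<in>A. X_path {T - u} (\<lambda>_. y))"
    using B by (auto simp: X_path_def)
  moreover have "X_path {T - u} (\<lambda>_. y) \<in> future_cylinders (T - s) T" for y
    using B unfolding future_cylinders_def by (intro insertI2 CollectI exI[of _ "{T - u}"]) auto
  moreover have "countable ((\<lambda>y. X_path {T - u} (\<lambda>_. y)) ` A)"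
    by (intro countable_image countable_finite) simp
  ultimately show "B \<in> sigma_sets (space M) (future_cylinders (T - s) T)"
    by (auto intro: sigma_sets_UNION sigma_sets.Basic)
qed

lemma integrable_fun_X: "integrable M (\<lambda>w. (h :: 's \<Rightarrow> real) (X t w))"
proof (rule integrable_const_bound[where B = "\<Sum>z\<in>UNIV. \<bar>h z\<bar>"])
  have "\<bar>h (X t w)\<bar> \<le> (\<Sum>z\<in>UNIV. \<bar>h z\<bar>)" for w
    by (rule member_le_sum[of _ UNIV "\<lambda>z. \<bar>h z\<bar>"]) auto
  then show "AE w in M. norm (h (X t w)) \<le> (\<Sum>z\<in>UNIV. \<bar>h z\<bar>)"
    by simp
  show "(\<lambda>w. h (X t w)) \<in> borel_measurable M"
    by (rule measurable_compose[OF X_measurable borel_measurable_count_space])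
qed

lemma set_integral_fun_X:
  fixes h :: "'s \<Rightarrow> real"
  assumes "A \<in> sets M"
  shows "(\<integral>w\<in>A. h (X t w) \<partial>M) = (\<Sum>z\<in>UNIV. h z * prob (A \<inter> {w \<in> space M. X t w = z}))"
proof -
  let ?A = "\<lambda>z. A \<inter> {w \<in> space M. X t w = z}"
  have A: "?A z \<in> sets M" for z
    using assms by measurable
  have "indicator A w * h (X t w) = (\<Sum>z\<in>UNIV. h z * indicator (?A z) w)" if "w \<in> space M" for w
  proof -
    have "(\<Sum>z\<in>UNIV. h z * indicator (?A z) w) = (\<Sum>z\<in>UNIV. if z = X t w then h z * indicator A w else 0)"
      using that by (intro sum.cong refl) (auto simp: indicator_def)
    then show ?thesis
      by (simp add: sum.delta mult.commute)
  qed
  then have "(\<integral>w\<in>A. h (X t w) \<partial>M) = (\<integral>w. (\<Sum>z\<in>UNIV. h z * indicator (?A z) w) \<partial>M)"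
    unfolding set_lebesgue_integral_def by (intro Bochner_Integration.integral_cong) simp_all
  also have "\<dots> = (\<Sum>z\<in>UNIV. \<integral>w. h z * indicator (?A z) w \<partial>M)"
  proof (rule Bochner_Integration.integral_sum)
    show "integrable M (\<lambda>w. h z * indicator (?A z) w)" for z
      using A by (intro integrable_mult_right integrable_real_indicator) (simp_all add: emeasure_eq_measure)
  qed
  also have "\<dots> = (\<Sum>z\<in>UNIV. h z * prob (?A z))"
    using A by (simp add: Int_absorb2 sets.sets_into_space)
  finally show ?thesis .
qed

lemma prob_cond_indep_rev_filtration:
  assumes ab: "0 \<le> a" "a < b" "b \<le> T" and A: "A \<in> sets (rev_filtration M X T (T - b))"
  shows "prob (A \<inter> {w \<in> space M. X a w = z \<and> X b w = x})
    = law a z * uniformized_kernel P (b - a) z x / law b x * prob (A \<inter> {w \<in> space M. X b w = x})"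
proof (cases "law b x = 0")
  case True
  have "prob (A \<inter> {w \<in> space M. X a w = z \<and> X b w = x}) \<le> law b x"
    unfolding law_def by (rule finite_measure_mono) auto
  then show ?thesis
    using True measure_nonneg[of M] by (simp add: order_antisym)
next
  case False
  have "A \<in> sigma_sets (space M) (future_cylinders b T)"
    using rev_filtration_future_cylinders[of "T - b" T] A ab by auto
  then have "prob (A \<inter> {w \<in> space M. X a w = z \<and> X b w = x}) * law b x
      = law a z * uniformized_kernel P (b - a) z x * prob (A \<inter> {w \<in> space M. X b w = x})"
    using prob_cond_indep_future[OF ab(1,2)] prob_X_two_times[of a b z x] ab by (simp add: law_def)
  then show ?thesis
    using False by (simp add: field_simps)
qed

lemma real_cond_exp_fun_X:
  assumes ab: "0 \<le> a" "a < b" "b \<le> T"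
  shows "AE w in M. real_cond_exp M (rev_filtration M X T (T - b)) (\<lambda>w. h (X a w)) w
    = (\<Sum>z\<in>UNIV. h z * (law a z * uniformized_kernel P (b - a) z (X b w))) / law b (X b w)"
proof -
  let ?F = "rev_filtration M X T (T - b)"
  let ?g = "\<lambda>x. (\<Sum>z\<in>UNIV. h z * (law a z * uniformized_kernel P (b - a) z x)) / law b x"
  interpret finite_measure_subalgebra M ?F
    by unfold_locales (rule subalgebra_rev_filtration)
  show ?thesis
  proof (rule real_cond_exp_charact)
    show "(\<lambda>w. ?g (X b w)) \<in> borel_measurable ?F"
      using measurable_compose[OF X_measurable_rev_filtration[of "T - b" T] borel_measurable_count_space] ab
      by simp
  next
    fix A
    assume A: "A \<in> sets ?F"
    then have "A \<in> sets M"
      using subalgebra_rev_filtration by (auto simp: subalgebra_def)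
    have "prob (A \<inter> {w \<in> space M. X a w = z})
        = (\<Sum>x\<in>UNIV. prob (A \<inter> {w \<in> space M. X a w = z \<and> X b w = x}))" for z
    proof -
      have "A \<inter> {w \<in> space M. X a w = z} = (\<Union>x. A \<inter> {w \<in> space M. X a w = z \<and> X b w = x})"
        by auto
      then show ?thesis
        using \<open>A \<in> sets M\<close> by (simp only:) (rule finite_measure_finite_Union, auto simp: disjoint_family_on_def)
    qed
    then have "(\<integral>w\<in>A. h (X a w) \<partial>M)
        = (\<Sum>z\<in>UNIV. \<Sum>x\<in>UNIV. h z * (law a z * uniformized_kernel P (b - a) z x / law b x
            * prob (A \<inter> {w \<in> space M. X b w = x})))"
      by (simp add: set_integral_fun_X[OF \<open>A \<in> sets M\<close>] prob_cond_indep_rev_filtration[OF ab A]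
          sum_distrib_left)
    also have "\<dots> = (\<Sum>x\<in>UNIV. \<Sum>z\<in>UNIV. h z * (law a z * uniformized_kernel P (b - a) z x / law b x
        * prob (A \<inter> {w \<in> space M. X b w = x})))"
      by (rule sum.swap)
    also have "\<dots> = (\<Sum>x\<in>UNIV. ?g x * prob (A \<inter> {w \<in> space M. X b w = x}))"
      by (simp add: sum_divide_distrib sum_distrib_right mult.assoc times_divide_eq_right
          times_divide_eq_left)
    also have "\<dots> = (\<integral>w\<in>A. ?g (X b w) \<partial>M)"
      by (rule set_integral_fun_X[OF \<open>A \<in> sets M\<close>, symmetric])
    finally show "(\<integral>w\<in>A. h (X a w) \<partial>M) = (\<integral>w\<in>A. ?g (X b w) \<partial>M)" .
  qed (rule integrable_fun_X)+
qed

lemma submartingale_on_rev_filtration: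
  fixes \<phi> :: "real \<Rightarrow> 's \<Rightarrow> real"
  assumes "0 \<le> T"
    and ineq: "\<And>a b x. 0 \<le> a \<Longrightarrow> a < b \<Longrightarrow> b \<le> T \<Longrightarrow>
      \<phi> b x \<le> (\<Sum>z\<in>UNIV. \<phi> a z * (law a z * uniformized_kernel P (b - a) z x)) / law b x"
  shows "submartingale_on M (rev_filtration M X T) {0..T} (\<lambda>s w. \<phi> (T - s) (X (T - s) w))"
  unfolding submartingale_on_def
proof (intro conjI ballI impI)
  fix s u
  assume s: "s \<in> {0..T}" and u: "u \<in> {0..T}" and "s \<le> u"
  let ?F = "rev_filtration M X T s"
  interpret finite_measure_subalgebra M ?F
    by unfold_locales (rule subalgebra_rev_filtration)
  show "AE w in M. \<phi> (T - s) (X (T - s) w) \<le> real_cond_exp M ?F (\<lambda>w. \<phi> (T - u) (X (T - u) w)) w"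
  proof (cases "s = u")
    case True
    have "AE w in M. real_cond_exp M ?F (\<lambda>w. \<phi> (T - s) (X (T - s) w)) w = \<phi> (T - s) (X (T - s) w)"
      using s by (intro real_cond_exp_F_meas integrable_fun_X
          measurable_compose[OF X_measurable_rev_filtration borel_measurable_count_space]) auto
    then show ?thesis
      using True by auto
  next
    case False
    let ?a = "T - u" and ?b = "T - s"
    have ab: "0 \<le> ?a" "?a < ?b" "?b \<le> T"
      using s u \<open>s \<le> u\<close> False by auto
    have "AE w in M. real_cond_exp M ?F (\<lambda>w. \<phi> ?a (X ?a w)) w
      = (\<Sum>z\<in>UNIV. \<phi> ?a z * (law ?a z * uniformized_kernel P (?b - ?a) z (X ?b w))) / law ?b (X ?b w)"
      using real_cond_exp_fun_X[OF ab, of "\<phi> ?a"] by simp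
    then show ?thesis
      by eventually_elim (use ineq[OF ab] in simp)
  qed
qed (use subalgebra_rev_filtration sets_rev_filtration_mono integrable_fun_X in \<open>auto intro:
      measurable_compose[OF X_measurable_rev_filtration borel_measurable_count_space]\<close>)

lemma submartingale_on_xlnx_ratio:
  fixes p :: "real \<Rightarrow> 's \<Rightarrow> real"
  assumes p0: "invariant_distribution P p0" "\<And>y. 0 < p0 y" and "0 \<le> T"
    and p: "\<And>t y. 0 \<le> t \<Longrightarrow> 0 < p t y"
      "\<And>s t y. 0 \<le> s \<Longrightarrow> s \<le> t \<Longrightarrow> p t y = (\<Sum>x\<in>UNIV. p s x * uniformized_kernel P (t - s) x y)"
  shows "submartingale_on M (rev_filtration M X T) {0..T}
    (\<lambda>s w. p (T - s) (X (T - s) w) / p0 (X (T - s) w) * ln (p (T - s) (X (T - s) w) / p0 (X (T - s) w)))"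
proof (rule submartingale_on_rev_filtration[where \<phi> = "\<lambda>t y. p t y / p0 y * ln (p t y / p0 y)"])
  fix a b x
  assume ab: "0 \<le> a" "a < b" "b \<le> T"
  have "p b x / p0 x * ln (p b x / p0 x)
      \<le> (\<Sum>z\<in>UNIV. p a z / p0 z * ln (p a z / p0 z) * (p0 z * uniformized_kernel P (b - a) z x)) / p0 x"
    using ab p p0 uniformized_kernel_nonneg[OF stochastic] uniformized_kernel_invariant[OF stochastic p0(1)]
    by (intro xlnx_ratio_kernel_le) auto
  then show "p b x / p0 x * ln (p b x / p0 x)
      \<le> (\<Sum>z\<in>UNIV. p a z / p0 z * ln (p a z / p0 z) * (law a z * uniformized_kernel P (b - a) z x)) / law b x"
    using ab by (simp add: law_invariant[OF p0(1)])
qed fact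

lemma submartingale_on_ln_ratio:
  assumes q: "invariant_distribution P q" "\<And>y. 0 < q y" and "\<And>y. 0 < p0 y" "0 \<le> T"
  shows "submartingale_on M (rev_filtration M X T) {0..T}
    (\<lambda>s w. ln (law (T - s) (X (T - s) w) / q (X (T - s) w)))"
proof (rule submartingale_on_rev_filtration[where \<phi> = "\<lambda>t y. ln (law t y / q y)"])
  fix a b x
  assume ab: "0 \<le> a" "a < b" "b \<le> T"
  then show "ln (law b x / q x) \<le> (\<Sum>z\<in>UNIV. ln (law a z / q z) * (law a z * uniformized_kernel P (b - a) z x)) / law b x"
    using assms law_pos law_kernel[of a b x, symmetric] uniformized_kernel_nonneg[OF stochastic]
      uniformized_kernel_invariant[OF stochastic q(1)]
    by (intro ln_ratio_kernel_le) auto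
qed fact

end

theorem proposition7p1:
  fixes Pi :: "'s::finite \<Rightarrow> 's \<Rightarrow> real"
    and q p0 :: "'s \<Rightarrow> real"
    and MP MQ :: "'w measure"
    and Z :: "nat \<Rightarrow> 'w \<Rightarrow> 's"
    and N :: "real \<Rightarrow> 'w \<Rightarrow> nat"
    and T :: real
  assumes "stochastic_matrix Pi" and "irreducible_matrix Pi"
    and "invariant_distribution Pi q"
    and "\<forall>y. 0 < p0 y"
    and "uniformized_chain MP Pi p0 Z N"
    and "uniformized_chain MQ Pi q Z N"
    and "0 < T"
  defines "p \<equiv> \<lambda>t y. measure MP {w \<in> space MP. ctmc Z N t w = y}"
    and "ell \<equiv> \<lambda>t y. measure MP {w \<in> space MP. ctmc Z N t w = y} / q y"
  shows "submartingale_on MQ (rev_filtration MQ (ctmc Z N) T) {0..T}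
           (\<lambda>s w. ell (T - s) (ctmc Z N (T - s) w) * ln (ell (T - s) (ctmc Z N (T - s) w)))
         \<and> (\<forall>t\<ge>0. 0 \<le> rel_entropy (p t) q)
         \<and> (\<forall>s t. 0 \<le> s \<longrightarrow> s \<le> t \<longrightarrow> rel_entropy (p t) q \<le> rel_entropy (p s) q)
         \<and> ((\<lambda>t. rel_entropy (p t) q) \<longlongrightarrow> 0) at_top
         \<and> submartingale_on MP (rev_filtration MP (ctmc Z N) T) {0..T}
           (\<lambda>s w. ln (ell (T - s) (ctmc Z N (T - s) w)))"
proof -
  interpret P: uniformized_process MP Pi p0 Z N
    using assms(5,1) by (rule uniformized_process.intro)
  interpret Q: uniformized_process MQ Pi q Z N
    using assms(6,1) by (rule uniformized_process.intro)
  have q: "\<And>y. 0 < q y" "(\<Sum>y\<in>UNIV. q y) = 1"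
    using invariant_distribution_pos[OF assms(1-3)] assms(3) by (auto simp: invariant_distribution_def)
  have law_pos: "\<And>t y. 0 \<le> t \<Longrightarrow> 0 < P.law t y"
    using P.law_pos assms(4) by blast
  have "p = P.law" "ell = (\<lambda>t y. P.law t y / q y)"
    by (simp_all add: p_def ell_def P.law_def[abs_def])
  then show ?thesis
  proof (simp only:, intro conjI allI impI)
    show "submartingale_on MQ (rev_filtration MQ (ctmc Z N) T) {0..T}
        (\<lambda>s w. P.law (T - s) (ctmc Z N (T - s) w) / q (ctmc Z N (T - s) w)
          * ln (P.law (T - s) (ctmc Z N (T - s) w) / q (ctmc Z N (T - s) w)))"
      using assms(3,7) q law_pos P.law_kernel by (intro Q.submartingale_on_xlnx_ratio) auto
    show "0 \<le> rel_entropy (P.law t) q" if "0 \<le> t" for t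
      using that law_pos P.sum_law q by (intro rel_entropy_nonneg) auto
    show "rel_entropy (P.law t) q \<le> rel_entropy (P.law s) q" if "0 \<le> s" "s \<le> t" for s t
      using that law_pos P.law_kernel[of s t] q(1) assms(1,3)
      by (intro rel_entropy_kernel_le[where K = "uniformized_kernel Pi (t - s)"])
        (auto simp: uniformized_kernel_nonneg uniformized_kernel_row_sum uniformized_kernel_invariant)
    show "((\<lambda>t. rel_entropy (P.law t) q) \<longlongrightarrow> 0) at_top"
      using assms(2,3) q(1) by (intro tendsto_rel_entropy_0 P.law_tendsto_invariant)
    show "submartingale_on MP (rev_filtration MP (ctmc Z N) T) {0..T}
        (\<lambda>s w. ln (P.law (T - s) (ctmc Z N (T - s) w) / q (ctmc Z N (T - s) w)))"
      using assms(3,4,7) q(1) by (intro P.submartingale_on_ln_ratio) auto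
  qed
qed

end
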